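(* For any $\epsilon\in(0,1/8)$ there exist $\theta=\theta(\epsilon)>0$ and $n_0$ depending on $\epsilon$ such that for all $n\ge n_0$ and all $x\in\mathbb{S}^{n-1}$ with $|\langle x,1_n/\sqrt{n}\rangle|\le1/2$, \[\mathcal{L}(q\cdot x,\theta)\le1/2+\epsilon,\] where $q$ is uniformly distributed on the set of vectors in $\{0,1\}^n$ with coordinate sum $\lfloor n/2\rfloor$.
   Context: $1_n$ is the all-ones vector in $\mathbb{R}^n$, $\mathbb{S}^{n-1}$ the Euclidean unit sphere, and for a random variable $\xi$ and $r\ge0$, $\mathcal{L}(\xi,r)=\sup_{z\in\mathbb{R}}\mathbb{P}[|\xi-z|\le r]$. *)

theory Defs
  imports "HOL-Probability.Probability"
begin

text \<open>Vectors in R^n are modelled as functions nat => real, only coordinates i < n matter.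
  Slice: 0/1 vectors (supported on {..<n}) with coordinate sum floor(n/2).\<close>
definition slice :: "nat \<Rightarrow> (nat \<Rightarrow> real) set" where
  "slice n = {q. (\<forall>i<n. q i = 0 \<or> q i = 1) \<and> (\<forall>i\<ge>n. q i = 0)
                 \<and> (\<Sum>i<n. q i) = real (n div 2)}"

definition dotn :: "nat \<Rightarrow> (nat \<Rightarrow> real) \<Rightarrow> (nat \<Rightarrow> real) \<Rightarrow> real" where
  "dotn n u v = (\<Sum>i<n. u i * v i)"

definition levy_slice :: "nat \<Rightarrow> (nat \<Rightarrow> real) \<Rightarrow> real \<Rightarrow> real" where
  "levy_slice n x r = (SUP z\<in>(UNIV::real set).
      measure (measure_pmf (pmf_of_set (slice n))) {q. \<bar>dotn n q x - z\<bar> \<le> r})"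

end

theory Submission
  imports Defs
begin

(* Identify the slice with the (n div 2)-subsets S of {..<n}, so that q \<bullet> x becomes sum x S.
  If some coordinate is large, |x i| \<ge> 4\<theta>, then all but O(1/\<theta>\<^sup>2) coordinates j differ from
  x i by more than 2\<theta>; exchanging i and j in a set separating them moves the sum by more
  than 2\<theta>, and double counting these exchanges shows that at most half of the sets, up to
  O(1/(\<theta>\<^sup>2 n)), are close to any given z.
  Otherwise all coordinates are small. Sort x and pair l with l + h, h = n - n div 2. Flipping
  the first pairs of S up to the first time the prefix sum of the signed pair differences
  exceeds 2\<theta> is an involution sending close sets to far ones, so only sets whose prefix sums
  stay in [-2\<theta>, 2\<theta>] matter. Averaging over all flip patterns turns these prefix sums into a
  random walk; optional stopping bounds the chance of staying confined by (10\<theta>)\<^sup>2 over the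
  variance of the walk, which a second moment computation shows to be at least a constant
  for most sets, as the sorted pairing gives \<Sum>(x l - x (l + h))\<^sup>2 \<ge> 3/4. *)

section \<open>Subsets of a fixed size\<close>

definition ksubsets :: "nat \<Rightarrow> nat \<Rightarrow> nat set set" where
  "ksubsets n k = {S. S \<subseteq> {..<n} \<and> card S = k}"

lemma finite_ksubsets [simp]: "finite (ksubsets n k)"
  unfolding ksubsets_def by (rule finite_subset[of _ "Pow {..<n}"]) auto

lemma card_ksubsets: "card (ksubsets n k) = n choose k"
  unfolding ksubsets_def using n_subsets[of "{..<n}" k] by simp

lemma ksubsetsD:
  assumes "S \<in> ksubsets n k"
  shows "S \<subseteq> {..<n}" "finite S" "card S = k"
  using assms finite_subset[of S "{..<n}"] unfolding ksubsets_def by auto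

lemma card_Collect_split:
  assumes "finite A"
  shows "card {x \<in> A. P x} = card {x \<in> A. P x \<and> Q x} + card {x \<in> A. P x \<and> \<not> Q x}"
proof -
  have "{x \<in> A. P x} = {x \<in> A. P x \<and> Q x} \<union> {x \<in> A. P x \<and> \<not> Q x}" by auto
  then show ?thesis using assms by (simp add: card_Un_disjoint[symmetric] Int_def)
qed

lemma card_ksubsets_containing_avoiding:
  assumes "I \<subseteq> {..<n}" "E \<subseteq> {..<n}" "I \<inter> E = {}" "card I \<le> k"
  shows "card {S \<in> ksubsets n k. I \<subseteq> S \<and> S \<inter> E = {}} = (n - card I - card E) choose (k - card I)"
proof -
  have fin: "finite I" "finite E" using assms(1,2) finite_subset by auto
  let ?T = "{T. T \<subseteq> {..<n} - I - E \<and> card T = k - card I}"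
  have "bij_betw (\<lambda>S. S - I) {S \<in> ksubsets n k. I \<subseteq> S \<and> S \<inter> E = {}} ?T"
  proof (rule bij_betw_byWitness[where f' = "\<lambda>T. T \<union> I"])
    show "(\<lambda>S. S - I) ` {S \<in> ksubsets n k. I \<subseteq> S \<and> S \<inter> E = {}} \<subseteq> ?T"
      using fin by (auto simp: ksubsets_def card_Diff_subset dest: finite_subset)
    show "(\<lambda>T. T \<union> I) ` ?T \<subseteq> {S \<in> ksubsets n k. I \<subseteq> S \<and> S \<inter> E = {}}"
    proof
      fix S assume "S \<in> (\<lambda>T. T \<union> I) ` ?T"
      then obtain T where T: "T \<subseteq> {..<n} - I - E" "card T = k - card I" "S = T \<union> I" by blast
      then have "card (T \<union> I) = k"
        using assms(4) fin by (subst card_Un_disjoint) (auto dest: finite_subset)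
      then show "S \<in> {S \<in> ksubsets n k. I \<subseteq> S \<and> S \<inter> E = {}}"
        using T assms(1,3) by (auto simp: ksubsets_def)
    qed
  qed auto
  then have "card {S \<in> ksubsets n k. I \<subseteq> S \<and> S \<inter> E = {}} = card ({..<n} - I - E) choose (k - card I)"
    by (simp add: bij_betw_same_card n_subsets)
  also have "card ({..<n} - I - E) = n - card I - card E"
  proof -
    have "{..<n} - I - E = {..<n} - (I \<union> E)" by blast
    then show ?thesis using assms fin by (simp add: card_Diff_subset card_Un_disjoint)
  qed
  finally show ?thesis .
qed

definition separates :: "nat set \<Rightarrow> nat \<Rightarrow> nat \<Rightarrow> bool" where
  "separates S a b \<longleftrightarrow> (a \<in> S) \<noteq> (b \<in> S)"

lemma card_ksubsets_in_out:
  assumes "a < n" "b < n" "a \<noteq> b" "1 \<le> k"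
  shows "card {S \<in> ksubsets n k. a \<in> S \<and> b \<notin> S} = (n - 2) choose (k - 1)"
proof -
  have "{S \<in> ksubsets n k. a \<in> S \<and> b \<notin> S} = {S \<in> ksubsets n k. {a} \<subseteq> S \<and> S \<inter> {b} = {}}"
    by auto
  then show ?thesis
    using assms card_ksubsets_containing_avoiding[of "{a}" n "{b}" k] by (simp add: numeral_2_eq_2)
qed

lemma card_ksubsets_two_in_two_out:
  assumes "a < n" "b < n" "c < n" "d < n" "distinct [a, b, c, d]" "2 \<le> k"
  shows "card {S \<in> ksubsets n k. a \<in> S \<and> b \<in> S \<and> c \<notin> S \<and> d \<notin> S} = (n - 4) choose (k - 2)"
proof -
  have "{S \<in> ksubsets n k. a \<in> S \<and> b \<in> S \<and> c \<notin> S \<and> d \<notin> S}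
      = {S \<in> ksubsets n k. {a, b} \<subseteq> S \<and> S \<inter> {c, d} = {}}"
    by auto
  then show ?thesis
    using assms card_ksubsets_containing_avoiding[of "{a, b}" n "{c, d}" k] by (simp add: eval_nat_numeral)
qed

lemma card_ksubsets_separating:
  assumes "a < n" "b < n" "a \<noteq> b" "1 \<le> k"
  shows "card {S \<in> ksubsets n k. separates S a b} = 2 * ((n - 2) choose (k - 1))"
proof -
  have "card {S \<in> ksubsets n k. separates S a b}
      = card {S \<in> ksubsets n k. separates S a b \<and> a \<in> S}
      + card {S \<in> ksubsets n k. separates S a b \<and> a \<notin> S}"
    by (rule card_Collect_split) simp
  also have "\<dots> = card {S \<in> ksubsets n k. a \<in> S \<and> b \<notin> S} + card {S \<in> ksubsets n k. b \<in> S \<and> a \<notin> S}"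
    unfolding separates_def by (intro arg_cong2[where f = "(+)"] arg_cong[where f = card]) auto
  finally show ?thesis
    using assms card_ksubsets_in_out[of a n b k] card_ksubsets_in_out[of b n a k] by simp
qed

lemma card_ksubsets_separating_two_pairs:
  assumes "a < n" "b < n" "c < n" "d < n" "distinct [a, b, c, d]" "2 \<le> k"
  shows "card {S \<in> ksubsets n k. separates S a b \<and> separates S c d} = 4 * ((n - 4) choose (k - 2))"
proof -
  let ?K = "ksubsets n k"
  let ?N = "\<lambda>P. card {S \<in> ?K. P S}"
  have split: "?N P = ?N (\<lambda>S. P S \<and> Q S) + ?N (\<lambda>S. P S \<and> \<not> Q S)" for P Q
    by (rule card_Collect_split) simp
  have "?N (\<lambda>S. separates S a b \<and> separates S c d)
      = ?N (\<lambda>S. a \<in> S \<and> c \<in> S \<and> b \<notin> S \<and> d \<notin> S) + ?N (\<lambda>S. a \<in> S \<and> d \<in> S \<and> b \<notin> S \<and> c \<notin> S)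
      + (?N (\<lambda>S. b \<in> S \<and> c \<in> S \<and> a \<notin> S \<and> d \<notin> S) + ?N (\<lambda>S. b \<in> S \<and> d \<in> S \<and> a \<notin> S \<and> c \<notin> S))"
    unfolding split[of "\<lambda>S. separates S a b \<and> separates S c d" "\<lambda>S. a \<in> S"]
      split[of "\<lambda>S. (separates S a b \<and> separates S c d) \<and> a \<in> S" "\<lambda>S. c \<in> S"]
      split[of "\<lambda>S. (separates S a b \<and> separates S c d) \<and> a \<notin> S" "\<lambda>S. c \<in> S"]
    unfolding separates_def by (intro arg_cong2[where f = "(+)"] arg_cong[where f = card]) auto
  also have "\<dots> = 4 * ((n - 4) choose (k - 2))"
    using assms by (simp add: card_ksubsets_two_in_two_out)
  finally show ?thesis .
qed

section \<open>Binomial estimates\<close>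

lemma choose_mult_complement:
  assumes "1 \<le> k" "k < n"
  shows "(n choose k) * (k * (n - k)) = n * (n - 1) * ((n - 2) choose (k - 1))"
proof -
  obtain j where j: "k = Suc j" using assms by (cases k) auto
  have "n - k = (n - 1) - j" using j by simp
  then have "(n choose k) * (k * (n - k)) = (k * (n choose k)) * ((n - 1) - j)"
    by (simp only: ac_simps)
  also have "\<dots> = n * (((n - 1) - j) * ((n - 1) choose j))"
    using binomial_absorption[of j n] j by simp
  also have "\<dots> = n * (n - 1) * ((n - 2) choose (k - 1))"
    using binomial_absorb_comp[of "n - 1" j] j by (simp add: numeral_2_eq_2)
  finally show ?thesis .
qed
lemma central_choose_le:
  assumes "2 \<le> n"
  shows "n choose (n div 2) \<le> 4 * ((n - 2) choose (n div 2 - 1))"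
proof -
  let ?k = "n div 2"
  have "n * (n - 1) \<le> 4 * (?k * (n - ?k))"
    by (cases "even n") (auto elim!: evenE oddE simp: algebra_simps)
  then have "(n choose ?k) * (n * (n - 1)) \<le> 4 * ((n choose ?k) * (?k * (n - ?k)))"
    by (metis mult.left_commute mult_le_mono2)
  also have "\<dots> = 4 * ((n - 2) choose (?k - 1)) * (n * (n - 1))"
    using assms by (simp add: choose_mult_complement)
  finally show ?thesis using assms by simp
qed

lemma choose_ratio_le:
  assumes "2 \<le> k" "k + 2 \<le> n"
  shows "((n - 4) choose (k - 2)) * (n choose k) * ((n - 2) * (n - 3))
       \<le> ((n - 2) choose (k - 1))\<^sup>2 * (n * (n - 1))"
proof -
  let ?B0 = "n choose k" and ?B1 = "(n - 2) choose (k - 1)" and ?B2 = "(n - 4) choose (k - 2)"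
  have I1: "?B0 * (k * (n - k)) = n * (n - 1) * ?B1"
    using assms by (simp add: choose_mult_complement)
  have I2: "?B1 * ((k - 1) * (n - k - 1)) = (n - 2) * (n - 3) * ?B2"
    using assms choose_mult_complement[of "k - 1" "n - 2"]
    by (simp add: eval_nat_numeral)
  have "?B2 * ?B0 * ((n - 2) * (n - 3)) * (k * (n - k))
      = ((n - 2) * (n - 3) * ?B2) * (?B0 * (k * (n - k)))"
    by (simp only: ac_simps)
  also have "\<dots> = (?B1 * ((k - 1) * (n - k - 1))) * (n * (n - 1) * ?B1)"
    by (simp only: I1 I2)
  also have "\<dots> \<le> (?B1 * (k * (n - k))) * (n * (n - 1) * ?B1)"
    by (intro mult_right_mono mult_left_mono mult_le_mono) auto
  also have "\<dots> = (?B1\<^sup>2 * (n * (n - 1))) * (k * (n - k))"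
    by (simp only: power2_eq_square ac_simps)
  finally show ?thesis using assms by simp
qed

lemma central_choose_ratio_le:
  assumes "8 \<le> n"
  shows "real ((n - 4) choose (n div 2 - 2)) * real (n choose (n div 2))
       \<le> (1 + 8 / real n) * (real ((n - 2) choose (n div 2 - 1)))\<^sup>2"
proof -
  let ?B0 = "real (n choose (n div 2))" and ?B1 = "real ((n - 2) choose (n div 2 - 1))"
    and ?B2 = "real ((n - 4) choose (n div 2 - 2))"
  have pos: "0 < (real n - 2) * (real n - 3)" using assms by simp
  have "((n - 4) choose (n div 2 - 2)) * (n choose (n div 2)) * ((n - 2) * (n - 3))
      \<le> ((n - 2) choose (n div 2 - 1))\<^sup>2 * (n * (n - 1))"
    using assms by (intro choose_ratio_le) auto
  then have "?B2 * ?B0 * real ((n - 2) * (n - 3)) \<le> ?B1\<^sup>2 * real (n * (n - 1))"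
    by (metis of_nat_le_iff of_nat_mult of_nat_power)
  moreover have "real ((n - 2) * (n - 3)) = (real n - 2) * (real n - 3)"
    "real (n * (n - 1)) = real n * (real n - 1)"
    using assms by simp_all
  ultimately have "?B2 * ?B0 * ((real n - 2) * (real n - 3)) \<le> ?B1\<^sup>2 * (real n * (real n - 1))"
    by (simp only:)
  also have "\<dots> \<le> ?B1\<^sup>2 * ((1 + 8 / real n) * ((real n - 2) * (real n - 3)))"
  proof (intro mult_left_mono)
    have "(real n + 8) * ((real n - 2) * (real n - 3)) - real n * (real n * (real n - 1))
        = (real n - 8) * (4 * real n - 2) + 32"
      by (simp add: algebra_simps)
    moreover have "0 \<le> (real n - 8) * (4 * real n - 2)" using assms by simp
    ultimately have "real n * (real n * (real n - 1)) \<le> (real n + 8) * ((real n - 2) * (real n - 3))"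
      by linarith
    moreover have "(1 + 8 / real n) * ((real n - 2) * (real n - 3))
        = (real n + 8) * ((real n - 2) * (real n - 3)) / real n"
      using assms by (simp add: field_simps)
    ultimately show "real n * (real n - 1) \<le> (1 + 8 / real n) * ((real n - 2) * (real n - 3))"
      using assms by (simp add: le_divide_eq mult.commute)
  qed simp
  finally have "(?B2 * ?B0) * ((real n - 2) * (real n - 3))
      \<le> ((1 + 8 / real n) * ?B1\<^sup>2) * ((real n - 2) * (real n - 3))"
    by (simp only: ac_simps)
  then show ?thesis using pos by (rule mult_right_le_imp_le)
qed

lemma central_choose_mult_le:
  assumes "2 \<le> n"
  shows "(n choose (n div 2)) * (n - n div 2) \<le> 2 * n * ((n - 2) choose (n div 2 - 1))"
proof -
  let ?k = "n div 2" and ?C = "(n - 2) choose (n div 2 - 1)"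
  have "(n choose ?k) * (n - ?k) * ?k = n * (n - 1) * ?C"
    using choose_mult_complement[of ?k n] assms by (simp add: ac_simps)
  also have "\<dots> \<le> n * (2 * ?k) * ?C" by (intro mult_right_mono mult_left_mono) auto
  also have "\<dots> = 2 * n * ?C * ?k" by simp
  finally show ?thesis using assms by simp
qed

lemma twice_choose_le:
  assumes "1 \<le> k" "k < n"
  shows "2 * ((n - 2) choose (k - 1)) \<le> n choose k"
proof -
  have "2 * ((n - 2) choose (k - 1)) = card {S \<in> ksubsets n k. separates S 0 (n - 1)}"
    using assms by (simp add: card_ksubsets_separating)
  also have "\<dots> \<le> card (ksubsets n k)" by (intro card_mono) auto
  finally show ?thesis by (simp add: card_ksubsets)
qed

lemma central_choose_variance_le:
  assumes "8 \<le> n"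
  defines "N \<equiv> real (n choose (n div 2))" and "N1 \<equiv> 2 * real ((n - 2) choose (n div 2 - 1))"
    and "N2 \<equiv> 4 * real ((n - 4) choose (n div 2 - 2))"
  shows "N2 - N1\<^sup>2 / N \<le> 8 * N / real n"
proof -
  have N: "0 < N" unfolding N_def by simp
  have "2 * ((n - 2) choose (n div 2 - 1)) \<le> n choose (n div 2)"
    using assms(1) by (intro twice_choose_le) auto
  then have "real (2 * ((n - 2) choose (n div 2 - 1))) \<le> real (n choose (n div 2))"
    by (simp only: of_nat_le_iff)
  then have "N1 \<le> N" unfolding N1_def N_def by simp
  have "N2 * N \<le> 4 * ((1 + 8 / real n) * (real ((n - 2) choose (n div 2 - 1)))\<^sup>2)"
    using central_choose_ratio_le[OF assms(1)] unfolding N2_def N_def by simp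
  then have "N2 * N \<le> (1 + 8 / real n) * N1\<^sup>2" unfolding N1_def by (simp add: power2_eq_square)
  then have "N2 - N1\<^sup>2 / N \<le> 8 / real n * N1\<^sup>2 / N" using N by (simp add: field_simps)
  also have "\<dots> \<le> 8 / real n * N\<^sup>2 / N"
    using \<open>N1 \<le> N\<close> N by (intro divide_right_mono mult_left_mono power_mono) (auto simp: N1_def)
  finally show ?thesis using N by (simp add: power2_eq_square)
qed

section \<open>The slice as a family of subsets\<close>

lemma slice_eq_indicator_image:
  "slice n = (\<lambda>S. indicator S :: nat \<Rightarrow> real) ` ksubsets n (n div 2)"
proof (intro equalityI subsetI)
  fix q assume q: "q \<in> slice n"
  let ?S = "{i. i < n \<and> q i = 1}"
  have "q = indicator ?S"
    using q by (auto simp: slice_def indicator_def fun_eq_iff) (metis not_le)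
  moreover have "card ?S = n div 2"
  proof -
    have "real (n div 2) = (\<Sum>i<n. indicator ?S i)" using q \<open>q = indicator ?S\<close> by (simp add: slice_def)
    also have "\<dots> = real (card ({..<n} \<inter> {i. i \<in> ?S}))"
      unfolding indicator_def by (subst sum_of_bool_eq) auto
    also have "{..<n} \<inter> {i. i \<in> ?S} = ?S" by auto
    finally show ?thesis by simp
  qed
  ultimately show "q \<in> (\<lambda>S. indicator S) ` ksubsets n (n div 2)"
    by (auto simp: ksubsets_def)
next
  fix q assume "q \<in> (\<lambda>S. indicator S :: nat \<Rightarrow> real) ` ksubsets n (n div 2)"
  then obtain S where S: "S \<subseteq> {..<n}" "card S = n div 2" "q = indicator S"
    by (auto simp: ksubsets_def)
  then have "(\<Sum>i<n. q i) = real (n div 2)"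
    by (simp add: indicator_def Int_absorb1)
  then show "q \<in> slice n" using S by (auto simp: slice_def indicator_def)
qed

lemma dotn_indicator:
  assumes "S \<subseteq> {..<n}"
  shows "dotn n (indicator S) x = sum x S"
  using assms by (simp add: dotn_def indicator_def Int_absorb1)

lemma measure_slice:
  "measure (measure_pmf (pmf_of_set (slice n))) {q. P (dotn n q x)}
     = real (card {S \<in> ksubsets n (n div 2). P (sum x S)}) / real (card (ksubsets n (n div 2)))"
proof -
  let ?K = "ksubsets n (n div 2)" and ?ind = "\<lambda>S. indicator S :: nat \<Rightarrow> real"
  have inj: "inj_on ?ind A" for A
    by (rule inj_onI) (metis indicator_eq_0_iff indicator_simps(1) zero_neq_one subsetI subset_antisym)
  have "{..<n div 2} \<in> ?K" by (simp add: ksubsets_def)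
  then have ne: "slice n \<noteq> {}" "finite (slice n)" by (auto simp: slice_eq_indicator_image)
  have dot: "S \<in> ?K \<Longrightarrow> dotn n (?ind S) x = sum x S" for S
    by (simp add: dotn_indicator ksubsetsD(1))
  have "slice n \<inter> {q. P (dotn n q x)} = ?ind ` {S \<in> ?K. P (sum x S)}"
    unfolding slice_eq_indicator_image using dot by force
  then show ?thesis
    using ne by (simp add: measure_pmf_of_set card_image[OF inj] slice_eq_indicator_image)
qed

lemma levy_slice_le_of_card:
  assumes "\<And>z. real (card {S \<in> ksubsets n (n div 2). \<bar>sum x S - z\<bar> \<le> r})
                  \<le> c * real (card (ksubsets n (n div 2)))"
  shows "levy_slice n x r \<le> c"
  unfolding levy_slice_def
proof (rule cSUP_least)
  fix z
  have "0 < card (ksubsets n (n div 2))"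
    by (auto simp: card_gt_0_iff ksubsets_def intro: exI[of _ "{..<n div 2}"])
  then show "measure (measure_pmf (pmf_of_set (slice n))) {q. \<bar>dotn n q x - z\<bar> \<le> r} \<le> c"
    using assms[of z] by (simp add: measure_slice[where P = "\<lambda>s. \<bar>s - z\<bar> \<le> r"] divide_le_eq)
qed simp

section \<open>A large coordinate\<close>

definition swap_pair :: "nat \<Rightarrow> nat \<Rightarrow> nat set \<Rightarrow> nat set" where
  "swap_pair i j S = S - {i, j} \<union> ({i, j} - S)"

lemma swap_pair_swap_pair [simp]: "swap_pair i j (swap_pair i j S) = S"
  unfolding swap_pair_def by auto

lemma separates_swap_pair [simp]: "separates (swap_pair i j S) i j \<longleftrightarrow> separates S i j"
  unfolding swap_pair_def separates_def by auto

lemma swap_pair_eq: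
  assumes "separates S i j"
  shows "swap_pair i j S = (if i \<in> S then insert j (S - {i}) else insert i (S - {j}))"
  using assms unfolding swap_pair_def separates_def by auto

lemma swap_pair_in_ksubsets:
  assumes "S \<in> ksubsets n k" "i < n" "j < n" "separates S i j"
  shows "swap_pair i j S \<in> ksubsets n k"
proof -
  note S = ksubsetsD[OF assms(1)]
  have swap: "card (insert b (S - {a})) = card S" if "a \<in> S" "b \<notin> S" for a b
  proof -
    have "card (insert b (S - {a})) = Suc (card (S - {a}))" using that S(2) by simp
    also have "\<dots> = card S" using S(2) that(1) by (rule card_Suc_Diff1)
    finally show ?thesis .
  qed
  have "card (swap_pair i j S) = card S"
    using assms(4) swap[of i j] swap[of j i] by (auto simp: swap_pair_eq separates_def)
  moreover have "swap_pair i j S \<subseteq> {..<n}"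
    using S(1) assms(2,3) unfolding swap_pair_def by auto
  ultimately show ?thesis using S(3) by (simp add: ksubsets_def)
qed

lemma sum_swap_pair:
  fixes x :: "nat \<Rightarrow> real"
  assumes "finite S" "separates S i j"
  shows "\<bar>sum x (swap_pair i j S) - sum x S\<bar> = \<bar>x j - x i\<bar>"
proof (cases "i \<in> S")
  case True
  then have "j \<notin> S" using assms(2) by (simp add: separates_def)
  then show ?thesis using True assms(1)
    by (simp add: swap_pair_eq[OF assms(2)] sum.remove[of S i] algebra_simps)
next
  case False
  then have "j \<in> S" using assms(2) by (simp add: separates_def)
  then show ?thesis using False assms(1)
    by (simp add: swap_pair_eq[OF assms(2)] sum.remove[of S j] abs_minus_commute)
qed

lemma card_separating_far_ge:
  fixes x :: "nat \<Rightarrow> real"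
  assumes "i < n" "j < n" "i \<noteq> j" "1 \<le> k" and far: "2 * \<theta> < \<bar>x j - x i\<bar>"
  shows "(n - 2) choose (k - 1) \<le> card {S \<in> ksubsets n k. \<not> \<bar>sum x S - z\<bar> \<le> \<theta> \<and> separates S i j}"
proof -
  let ?K = "ksubsets n k"
  let ?close = "{S \<in> ?K. separates S i j \<and> \<bar>sum x S - z\<bar> \<le> \<theta>}"
  let ?far = "{S \<in> ?K. \<not> \<bar>sum x S - z\<bar> \<le> \<theta> \<and> separates S i j}"
  have "swap_pair i j ` ?close \<subseteq> ?far"
  proof (rule image_subsetI)
    fix S assume "S \<in> ?close"
    then have S: "S \<in> ?K" "separates S i j" "\<bar>sum x S - z\<bar> \<le> \<theta>" by auto
    have "\<bar>sum x (swap_pair i j S) - sum x S\<bar> > 2 * \<theta>"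
      using far sum_swap_pair[OF ksubsetsD(2)[OF S(1)] S(2), of x] by simp
    then show "swap_pair i j S \<in> ?far"
      using S assms swap_pair_in_ksubsets by auto
  qed
  moreover have "inj_on (swap_pair i j) ?close"
    by (rule inj_on_inverseI[where g = "swap_pair i j"]) simp
  ultimately have "card ?close \<le> card ?far"
    by (intro card_inj_on_le) auto
  moreover have "card {S \<in> ?K. separates S i j} = card ?close + card ?far"
    by (subst card_Collect_split[where Q = "\<lambda>S. \<bar>sum x S - z\<bar> \<le> \<theta>"])
      (auto intro!: arg_cong2[where f = "(+)"] arg_cong[where f = card])
  moreover have "card {S \<in> ?K. separates S i j} = 2 * ((n - 2) choose (k - 1))"
    using card_ksubsets_separating[OF assms(1-4)] .
  ultimately show ?thesis by linarith
qed

lemma card_separated_le: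
  assumes "S \<in> ksubsets n k" "k \<le> n - k" "G \<subseteq> {..<n}"
  shows "card {j \<in> G. separates S i j} \<le> n - k"
proof (cases "i \<in> S")
  case True
  then have "{j \<in> G. separates S i j} \<subseteq> {..<n} - S"
    using assms(3) by (auto simp: separates_def)
  then have "card {j \<in> G. separates S i j} \<le> card ({..<n} - S)" by (intro card_mono) auto
  then show ?thesis using ksubsetsD[OF assms(1)] by (simp add: card_Diff_subset)
next
  case False
  then have "{j \<in> G. separates S i j} \<subseteq> S" by (auto simp: separates_def)
  then have "card {j \<in> G. separates S i j} \<le> card S"
    using ksubsetsD[OF assms(1)] by (intro card_mono) auto
  then show ?thesis using ksubsetsD[OF assms(1)] assms(2) by simp
qed

lemma card_far_ge_of_far_coordinates:
  fixes x :: "nat \<Rightarrow> real"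
  assumes "1 \<le> k" "k \<le> n - k" "i < n" "G \<subseteq> {..<n} - {i}" "\<forall>j\<in>G. 2 * \<theta> < \<bar>x j - x i\<bar>"
  shows "card G * ((n - 2) choose (k - 1))
           \<le> card {S \<in> ksubsets n k. \<not> \<bar>sum x S - z\<bar> \<le> \<theta>} * (n - k)"
proof -
  let ?F = "{S \<in> ksubsets n k. \<not> \<bar>sum x S - z\<bar> \<le> \<theta>}"
  have finG: "finite G" using assms(4) finite_subset by blast
  have "card G * ((n - 2) choose (k - 1)) = (\<Sum>j\<in>G. (n - 2) choose (k - 1))" by simp
  also have "\<dots> \<le> (\<Sum>j\<in>G. card {S \<in> ?F. separates S i j})"
  proof (rule sum_mono)
    fix j assume "j \<in> G"
    moreover have "{S \<in> ?F. separates S i j}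
        = {S \<in> ksubsets n k. \<not> \<bar>sum x S - z\<bar> \<le> \<theta> \<and> separates S i j}" by auto
    ultimately show "(n - 2) choose (k - 1) \<le> card {S \<in> ?F. separates S i j}"
      using assms card_separating_far_ge[of i n j k \<theta> x z] by auto
  qed
  also have "\<dots> = (\<Sum>S\<in>?F. card {j \<in> G. separates S i j})"
    using finG by (intro sum_multicount_gen[symmetric]) auto
  also have "\<dots> \<le> (\<Sum>S\<in>?F. n - k)"
    using assms by (intro sum_mono card_separated_le) auto
  finally show ?thesis by simp
qed

lemma card_close_le_of_far_coordinates:
  fixes x :: "nat \<Rightarrow> real"
  assumes "2 \<le> n" "i < n" "G \<subseteq> {..<n} - {i}" "\<forall>j\<in>G. 2 * \<theta> < \<bar>x j - x i\<bar>"
  shows "real (card {S \<in> ksubsets n (n div 2). \<bar>sum x S - z\<bar> \<le> \<theta>})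
           \<le> (1 - real (card G) / (2 * real n)) * real (card (ksubsets n (n div 2)))"
proof -
  let ?K = "ksubsets n (n div 2)" and ?C = "(n - 2) choose (n div 2 - 1)"
  let ?A = "{S \<in> ?K. \<bar>sum x S - z\<bar> \<le> \<theta>}" and ?F = "{S \<in> ?K. \<not> \<bar>sum x S - z\<bar> \<le> \<theta>}"
  have "card G * card ?K * (n - n div 2) \<le> card G * (2 * n * ?C)"
    using central_choose_mult_le[OF assms(1)] by (simp add: card_ksubsets)
  also have "\<dots> = 2 * n * (card G * ?C)" by simp
  also have "\<dots> \<le> 2 * n * (card ?F * (n - n div 2))"
    using assms by (intro mult_left_mono card_far_ge_of_far_coordinates) auto
  finally have "(card G * card ?K) * (n - n div 2) \<le> (2 * n * card ?F) * (n - n div 2)"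
    by (simp only: ac_simps)
  then have "card G * card ?K \<le> 2 * n * card ?F" using assms(1) by simp
  then have "real (card G * card ?K) \<le> real (2 * n * card ?F)" by (simp only: of_nat_le_iff)
  then have "real (card G) * real (card ?K) \<le> 2 * real n * real (card ?F)" by simp
  then have "real (card G) / (2 * real n) * real (card ?K) \<le> real (card ?F)"
    using assms(1) by (simp add: divide_le_eq mult.commute)
  moreover have "card ?A + card ?F = card ?K"
    using card_Collect_split[of ?K "\<lambda>_. True" "\<lambda>S. \<bar>sum x S - z\<bar> \<le> \<theta>"] by simp
  then have "real (card ?A) + real (card ?F) = real (card ?K)" by (simp only: of_nat_add[symmetric])
  ultimately show ?thesis by (simp only: left_diff_distrib mult_1)
qed

lemma card_close_le_of_large_coordinate:
  fixes x :: "nat \<Rightarrow> real"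
  assumes "2 \<le> n" and norm: "(\<Sum>i<n. (x i)\<^sup>2) = 1" and i: "i < n" "4 * \<theta> \<le> \<bar>x i\<bar>" and "0 < \<theta>"
  shows "real (card {S \<in> ksubsets n (n div 2). \<bar>sum x S - z\<bar> \<le> \<theta>})
           \<le> (1/2 + (1 + 1 / (4 * \<theta>\<^sup>2)) / (2 * real n)) * real (card (ksubsets n (n div 2)))"
proof -
  define G where "G = {j \<in> {..<n} - {i}. 2 * \<theta> < \<bar>x j - x i\<bar>}"
  define C where "C = {j \<in> {..<n} - {i}. \<not> 2 * \<theta> < \<bar>x j - x i\<bar>}"
  have "G \<union> C = {..<n} - {i}" "G \<inter> C = {}" unfolding G_def C_def by auto
  then have "card G + card C = n - 1"
    using i card_Un_disjoint[of G C] by (simp add: G_def C_def)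
  then have "real (card G + card C) = real (n - 1)" by (simp only:)
  then have GC: "real (card G) + real (card C) = real n - 1" using i by simp
  have "real (card C) * (4 * \<theta>\<^sup>2) = (\<Sum>j\<in>C. (2 * \<theta>)\<^sup>2)" by (simp add: power_mult_distrib)
  also have "\<dots> \<le> (\<Sum>j\<in>C. (x j)\<^sup>2)"
  proof (rule sum_mono)
    fix j assume "j \<in> C"
    then have "2 * \<theta> \<le> \<bar>x j\<bar>" using i unfolding C_def by auto
    then have "(2 * \<theta>)\<^sup>2 \<le> \<bar>x j\<bar>\<^sup>2" using \<open>0 < \<theta>\<close> by (intro power_mono) auto
    then show "(2 * \<theta>)\<^sup>2 \<le> (x j)\<^sup>2" by simp
  qed
  also have "\<dots> \<le> 1" unfolding norm[symmetric] C_def by (intro sum_mono2) auto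
  finally have "real (card C) \<le> 1 / (4 * \<theta>\<^sup>2)" using \<open>0 < \<theta>\<close> by (simp add: le_divide_eq)
  then have "real n - real (card G) \<le> 1 + 1 / (4 * \<theta>\<^sup>2)" using GC by linarith
  then have "1/2 + (real n - real (card G)) / (2 * real n) \<le> 1/2 + (1 + 1 / (4 * \<theta>\<^sup>2)) / (2 * real n)"
    by (simp add: divide_right_mono)
  moreover have "1 - real (card G) / (2 * real n) = 1/2 + (real n - real (card G)) / (2 * real n)"
    using assms(1) by (simp add: field_simps)
  ultimately have "1 - real (card G) / (2 * real n) \<le> 1/2 + (1 + 1 / (4 * \<theta>\<^sup>2)) / (2 * real n)"
    by simp
  then have "(1 - real (card G) / (2 * real n)) * real (card (ksubsets n (n div 2)))
      \<le> (1/2 + (1 + 1 / (4 * \<theta>\<^sup>2)) / (2 * real n)) * real (card (ksubsets n (n div 2)))"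
    by (rule mult_right_mono) simp
  moreover have "G \<subseteq> {..<n} - {i}" "\<forall>j\<in>G. 2 * \<theta> < \<bar>x j - x i\<bar>" unfolding G_def by auto
  then have "real (card {S \<in> ksubsets n (n div 2). \<bar>sum x S - z\<bar> \<le> \<theta>})
      \<le> (1 - real (card G) / (2 * real n)) * real (card (ksubsets n (n div 2)))"
    by (rule card_close_le_of_far_coordinates[OF assms(1) i(1)])
  ultimately show ?thesis by linarith
qed

section \<open>Confined random walks\<close>

definition walk :: "(nat \<Rightarrow> real) \<Rightarrow> nat set \<Rightarrow> nat \<Rightarrow> real" where
  "walk c R t = (\<Sum>l<t. if l \<in> R then - c l else c l)"

definition walk_confined :: "(nat \<Rightarrow> real) \<Rightarrow> real \<Rightarrow> nat set \<Rightarrow> nat \<Rightarrow> bool" where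
  "walk_confined c r R L \<longleftrightarrow> (\<forall>t\<le>L. \<bar>walk c R t\<bar> \<le> r)"

(* Summed over all sign
  patterns it grows by 2 (c L)\<^sup>2 for every pattern that is still confined, which is the
  optional stopping argument behind card_walk_confined_le. *)
fun stopped_walk_sq :: "(nat \<Rightarrow> real) \<Rightarrow> real \<Rightarrow> nat set \<Rightarrow> nat \<Rightarrow> real" where
  "stopped_walk_sq c r R 0 = 0"
| "stopped_walk_sq c r R (Suc L) =
     (if walk_confined c r R L then (walk c R (Suc L))\<^sup>2 else stopped_walk_sq c r R L)"

lemma walk_0 [simp]: "walk c R 0 = 0"
  by (simp add: walk_def)

lemma walk_Suc: "walk c R (Suc t) = walk c R t + (if t \<in> R then - c t else c t)"
  by (simp add: walk_def)

lemma walk_confined_Suc: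
  "walk_confined c r R (Suc L) \<longleftrightarrow> walk_confined c r R L \<and> \<bar>walk c R (Suc L)\<bar> \<le> r"
  by (auto simp: walk_confined_def le_Suc_eq)

lemma walk_insert: "t \<le> L \<Longrightarrow> walk c (insert L R) t = walk c R t"
  unfolding walk_def by (intro sum.cong) auto

lemma walk_confined_insert: "M \<le> L \<Longrightarrow> walk_confined c r (insert L R) M = walk_confined c r R M"
  by (simp add: walk_confined_def walk_insert)

lemma stopped_walk_sq_insert: "M \<le> L \<Longrightarrow> stopped_walk_sq c r (insert L R) M = stopped_walk_sq c r R M"
  by (induction M) (simp_all add: walk_confined_insert walk_insert)

lemma stopped_walk_sq_confined: "walk_confined c r R L \<Longrightarrow> stopped_walk_sq c r R L = (walk c R L)\<^sup>2"
  by (cases L) (simp_all add: walk_confined_Suc)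

lemma stopped_walk_sq_le:
  assumes "\<And>l. \<bar>c l\<bar> \<le> D" "0 \<le> r"
  shows "stopped_walk_sq c r R L \<le> (r + D)\<^sup>2"
proof (induction L)
  case (Suc L)
  have "\<bar>walk c R (Suc L)\<bar> \<le> r + D" if "walk_confined c r R L"
    using that assms(1)[of L] by (auto simp: walk_Suc walk_confined_def)
  then have "walk_confined c r R L \<Longrightarrow> (walk c R (Suc L))\<^sup>2 \<le> (r + D)\<^sup>2"
    by (metis abs_le_square_iff abs_of_nonneg abs_ge_zero order.trans)
  then show ?case using Suc by simp
qed (use assms in simp)

lemma sum_Pow_lessThan_Suc:
  "(\<Sum>R\<in>Pow {..<Suc L}. f R) = (\<Sum>R\<in>Pow {..<L}. f R + f (insert L R))"
proof -
  have "inj_on (insert L) (Pow {..<L})"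
    by (rule inj_onI) (metis Diff_insert_absorb PowD lessThan_iff less_irrefl subsetD)
  moreover have "Pow {..<L} \<inter> insert L ` Pow {..<L} = {}" by auto
  ultimately show ?thesis
    by (simp add: lessThan_Suc Pow_insert sum.union_disjoint sum.reindex sum.distrib)
qed

lemma sum_stopped_walk_sq_Suc:
  "(\<Sum>R\<in>Pow {..<Suc L}. stopped_walk_sq c r R (Suc L))
     = 2 * (\<Sum>R\<in>Pow {..<L}. stopped_walk_sq c r R L)
       + 2 * (c L)\<^sup>2 * (\<Sum>R\<in>Pow {..<L}. of_bool (walk_confined c r R L))"
proof -
  have pair: "stopped_walk_sq c r R (Suc L) + stopped_walk_sq c r (insert L R) (Suc L)
      = 2 * stopped_walk_sq c r R L + 2 * (c L)\<^sup>2 * of_bool (walk_confined c r R L)"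
    if "R \<in> Pow {..<L}" for R
  proof (cases "walk_confined c r R L")
    case True
    have "L \<notin> R" using that by auto
    then have "stopped_walk_sq c r R (Suc L) = (walk c R L + c L)\<^sup>2"
      "stopped_walk_sq c r (insert L R) (Suc L) = (walk c R L - c L)\<^sup>2"
      using True by (simp_all add: walk_Suc walk_insert walk_confined_insert)
    moreover have "stopped_walk_sq c r R L = (walk c R L)\<^sup>2"
      using True by (rule stopped_walk_sq_confined)
    ultimately show ?thesis using True by (simp add: power2_eq_square algebra_simps)
  qed (simp add: walk_confined_insert stopped_walk_sq_insert)
  have "(\<Sum>R\<in>Pow {..<Suc L}. stopped_walk_sq c r R (Suc L))
      = (\<Sum>R\<in>Pow {..<L}. stopped_walk_sq c r R (Suc L) + stopped_walk_sq c r (insert L R) (Suc L))"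
    by (rule sum_Pow_lessThan_Suc)
  also have "\<dots> = (\<Sum>R\<in>Pow {..<L}.
      2 * stopped_walk_sq c r R L + 2 * (c L)\<^sup>2 * of_bool (walk_confined c r R L))"
    by (rule sum.cong[OF refl pair])
  finally show ?thesis by (simp only: sum.distrib sum_distrib_left)
qed

lemma count_walk_confined_Suc_le:
  "(\<Sum>R\<in>Pow {..<Suc L}. of_bool (walk_confined c r R (Suc L)) :: real)
     \<le> 2 * (\<Sum>R\<in>Pow {..<L}. of_bool (walk_confined c r R L))"
proof -
  have "(\<Sum>R\<in>Pow {..<Suc L}. of_bool (walk_confined c r R (Suc L)) :: real)
      \<le> (\<Sum>R\<in>Pow {..<Suc L}. of_bool (walk_confined c r R L))"
    by (intro sum_mono) (simp add: walk_confined_Suc)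
  also have "\<dots> = 2 * (\<Sum>R\<in>Pow {..<L}. of_bool (walk_confined c r R L))"
    by (simp add: sum_Pow_lessThan_Suc walk_confined_insert sum_distrib_left)
  finally show ?thesis .
qed

lemma card_walk_confined_le:
  assumes "\<And>l. \<bar>c l\<bar> \<le> D" "0 \<le> r"
  shows "real (card {R \<in> Pow {..<L}. walk_confined c r R L}) * (\<Sum>l<L. (c l)\<^sup>2) \<le> 2 ^ L * (r + D)\<^sup>2"
proof -
  define C where "C L = (\<Sum>R\<in>Pow {..<L}. of_bool (walk_confined c r R L) :: real)" for L
  define Q where "Q L = (\<Sum>R\<in>Pow {..<L}. stopped_walk_sq c r R L)" for L
  have "C L * (\<Sum>l<L. (c l)\<^sup>2) \<le> Q L" for L
  proof (induction L)
    case (Suc L)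
    have "C (Suc L) * (\<Sum>l<Suc L. (c l)\<^sup>2) \<le> 2 * C L * (\<Sum>l<Suc L. (c l)\<^sup>2)"
      unfolding C_def by (intro mult_right_mono count_walk_confined_Suc_le sum_nonneg) auto
    also have "\<dots> = 2 * (C L * (\<Sum>l<L. (c l)\<^sup>2)) + 2 * (c L)\<^sup>2 * C L"
      by (simp add: algebra_simps)
    also have "\<dots> \<le> 2 * Q L + 2 * (c L)\<^sup>2 * C L" using Suc by simp
    also have "\<dots> = Q (Suc L)" by (simp only: Q_def C_def sum_stopped_walk_sq_Suc)
    finally show ?case .
  qed (simp add: C_def Q_def)
  also have "Q L \<le> (\<Sum>R\<in>Pow {..<L}. (r + D)\<^sup>2)"
    unfolding Q_def by (intro sum_mono stopped_walk_sq_le assms)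
  also have "\<dots> = 2 ^ L * (r + D)\<^sup>2" by (simp add: card_Pow)
  also have "C L = real (card {R \<in> Pow {..<L}. walk_confined c r R L})"
    by (simp add: C_def Int_def)
  finally show ?thesis .
qed

section \<open>Flipping pairs of coordinates\<close>

definition pair_swap :: "nat \<Rightarrow> nat \<Rightarrow> nat set \<Rightarrow> nat \<Rightarrow> nat" where
  "pair_swap L h R i =
     (if i < L \<and> i \<in> R then i + h else if h \<le> i \<and> i < h + L \<and> i - h \<in> R then i - h else i)"

definition flip_pairs :: "nat \<Rightarrow> nat \<Rightarrow> nat set \<Rightarrow> nat set \<Rightarrow> nat set" where
  "flip_pairs L h R S = pair_swap L h R ` S"

definition pair_gain :: "nat \<Rightarrow> (nat \<Rightarrow> real) \<Rightarrow> nat set \<Rightarrow> nat \<Rightarrow> real" where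
  "pair_gain h x S l = (of_bool (l + h \<in> S) - of_bool (l \<in> S)) * (x l - x (l + h))"

definition prefix_gain :: "nat \<Rightarrow> (nat \<Rightarrow> real) \<Rightarrow> nat set \<Rightarrow> nat \<Rightarrow> real" where
  "prefix_gain h x S t = (\<Sum>l<t. pair_gain h x S l)"

lemma pair_swap_pair_swap [simp]: "L \<le> h \<Longrightarrow> pair_swap L h R (pair_swap L h R i) = i"
  unfolding pair_swap_def by auto

lemma pair_swap_lessThan: "L \<le> h \<Longrightarrow> L + h = n \<Longrightarrow> i < n \<Longrightarrow> pair_swap L h R i < n"
  unfolding pair_swap_def by auto

lemma pair_swap_left: "L \<le> h \<Longrightarrow> l < L \<Longrightarrow> pair_swap L h R l = (if l \<in> R then l + h else l)"
  unfolding pair_swap_def by auto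

lemma pair_swap_right: "L \<le> h \<Longrightarrow> l < L \<Longrightarrow> pair_swap L h R (l + h) = (if l \<in> R then l else l + h)"
  unfolding pair_swap_def by auto

lemma mem_flip_pairs_iff:
  assumes "L \<le> h"
  shows "i \<in> flip_pairs L h R S \<longleftrightarrow> pair_swap L h R i \<in> S"
proof
  assume "i \<in> flip_pairs L h R S"
  then obtain j where "j \<in> S" "i = pair_swap L h R j" by (auto simp: flip_pairs_def)
  then show "pair_swap L h R i \<in> S" using assms by simp
next
  assume "pair_swap L h R i \<in> S"
  then have "pair_swap L h R (pair_swap L h R i) \<in> flip_pairs L h R S" by (simp add: flip_pairs_def)
  then show "i \<in> flip_pairs L h R S" using assms by simp
qed

lemma flip_pairs_flip_pairs [simp]: "L \<le> h \<Longrightarrow> flip_pairs L h R (flip_pairs L h R S) = S"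
  by (auto simp: mem_flip_pairs_iff)

lemma flip_pairs_in_ksubsets:
  assumes "L \<le> h" "L + h = n" "S \<in> ksubsets n k"
  shows "flip_pairs L h R S \<in> ksubsets n k"
proof -
  have "inj_on (pair_swap L h R) S"
    by (rule inj_on_inverseI[where g = "pair_swap L h R"]) (simp add: assms(1))
  then show ?thesis
    using ksubsetsD[OF assms(3)] pair_swap_lessThan[OF assms(1,2)]
    by (auto simp: ksubsets_def flip_pairs_def card_image)
qed

lemma pair_gain_flip_pairs:
  assumes "L \<le> h" "l < L"
  shows "pair_gain h x (flip_pairs L h R S) l = (if l \<in> R then - pair_gain h x S l else pair_gain h x S l)"
  using assms by (cases "l \<in> R") (auto simp: pair_gain_def mem_flip_pairs_iff pair_swap_left pair_swap_right)

lemma sum_lessThan_pairs: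
  fixes g :: "nat \<Rightarrow> 'a::comm_monoid_add"
  assumes "L \<le> h" "L + h = n"
  shows "(\<Sum>i<n. g i) = (\<Sum>l<L. g l + g (l + h)) + (\<Sum>i\<in>{L..<h}. g i)"
proof -
  have "{..<n} = ({..<L} \<union> {L..<h}) \<union> {h..<h + L}" using assms by auto
  moreover have "sum g ({..<L} \<union> {L..<h}) = sum g {..<L} + sum g {L..<h}"
    by (rule sum.union_disjoint) auto
  moreover have "sum g (({..<L} \<union> {L..<h}) \<union> {h..<h + L}) = sum g ({..<L} \<union> {L..<h}) + sum g {h..<h + L}"
    by (rule sum.union_disjoint) (use assms in auto)
  ultimately have "(\<Sum>i<n. g i) = (\<Sum>i<L. g i) + (\<Sum>i\<in>{L..<h}. g i) + (\<Sum>i\<in>{h..<h + L}. g i)"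
    by simp
  moreover have "(\<Sum>i\<in>{h..<h + L}. g i) = (\<Sum>l<L. g (l + h))"
    using sum.shift_bounds_nat_ivl[of g 0 h L] by (simp add: lessThan_atLeast0 add.commute)
  ultimately show ?thesis by (simp add: sum.distrib ac_simps)
qed

lemma sum_eq_sum_lessThan_of_bool:
  fixes x :: "nat \<Rightarrow> real"
  shows "T \<subseteq> {..<n} \<Longrightarrow> sum x T = (\<Sum>i<n. of_bool (i \<in> T) * x i)"
  by (simp add: Int_absorb1)

lemma sum_flip_pairs:
  fixes x :: "nat \<Rightarrow> real"
  assumes "L \<le> h" "L + h = n" "S \<subseteq> {..<n}"
  shows "sum x (flip_pairs L h R S) - sum x S = (\<Sum>l<L. if l \<in> R then pair_gain h x S l else 0)"
proof -
  define g where "g i = (of_bool (pair_swap L h R i \<in> S) - of_bool (i \<in> S)) * x i" for i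
  have "flip_pairs L h R S \<subseteq> {..<n}"
    using assms pair_swap_lessThan[OF assms(1,2)] by (auto simp: flip_pairs_def)
  then have "sum x (flip_pairs L h R S) - sum x S
      = (\<Sum>i<n. of_bool (i \<in> flip_pairs L h R S) * x i) - (\<Sum>i<n. of_bool (i \<in> S) * x i)"
    using assms(3) by (simp only: sum_eq_sum_lessThan_of_bool)
  also have "\<dots> = (\<Sum>i<n. g i)"
    using assms(1) by (simp only: g_def left_diff_distrib sum_subtractf mem_flip_pairs_iff)
  also have "\<dots> = (\<Sum>l<L. g l + g (l + h)) + (\<Sum>i\<in>{L..<h}. g i)"
    by (rule sum_lessThan_pairs[OF assms(1,2)])
  also have "(\<Sum>i\<in>{L..<h}. g i) = 0"
    by (intro sum.neutral) (auto simp: g_def pair_swap_def)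
  also have "(\<Sum>l<L. g l + g (l + h)) = (\<Sum>l<L. if l \<in> R then pair_gain h x S l else 0)"
    using assms(1) by (intro sum.cong) (auto simp: g_def pair_gain_def pair_swap_left pair_swap_right algebra_simps)
  finally show ?thesis by simp
qed

lemma prefix_gain_flip_pairs:
  assumes "L \<le> h" "t \<le> L"
  shows "prefix_gain h x (flip_pairs L h R S) t = walk (pair_gain h x S) R t"
  unfolding prefix_gain_def walk_def using assms by (intro sum.cong) (auto simp: pair_gain_flip_pairs)

lemma prefix_gain_flip_prefix:
  assumes "L \<le> h" "s \<le> t" "t \<le> L"
  shows "prefix_gain h x (flip_pairs L h {..<t} S) s = - prefix_gain h x S s"
proof -
  have "prefix_gain h x (flip_pairs L h {..<t} S) s = walk (pair_gain h x S) {..<t} s"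
    using assms by (intro prefix_gain_flip_pairs) auto
  also have "\<dots> = - prefix_gain h x S s"
    unfolding walk_def prefix_gain_def sum_negf[symmetric] using assms(2) by (intro sum.cong) auto
  finally show ?thesis .
qed

lemma sum_flip_prefix:
  fixes x :: "nat \<Rightarrow> real"
  assumes "L \<le> h" "L + h = n" "S \<subseteq> {..<n}" "t \<le> L"
  shows "sum x (flip_pairs L h {..<t} S) - sum x S = prefix_gain h x S t"
proof -
  have "(\<Sum>l<L. if l \<in> {..<t} then pair_gain h x S l else 0) = (\<Sum>l\<in>{..<L} \<inter> {..<t}. pair_gain h x S l)"
    by (simp add: sum.inter_restrict)
  also have "{..<L} \<inter> {..<t} = {..<t}" using assms(4) by auto
  finally show ?thesis using sum_flip_pairs[OF assms(1-3)] by (simp add: prefix_gain_def)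
qed

definition exit_time :: "nat \<Rightarrow> nat \<Rightarrow> (nat \<Rightarrow> real) \<Rightarrow> real \<Rightarrow> nat set \<Rightarrow> nat" where
  "exit_time L h x r S = (LEAST t. t \<le> L \<and> r < \<bar>prefix_gain h x S t\<bar>)"

lemma exit_time_flip_prefix:
  assumes "L \<le> h" "t \<le> L" "r < \<bar>prefix_gain h x S t\<bar>"
  defines "T \<equiv> exit_time L h x r S"
  shows "T \<le> L" "r < \<bar>prefix_gain h x S T\<bar>"
    "exit_time L h x r (flip_pairs L h {..<T} S) = T"
proof -
  let ?P = "\<lambda>S t. t \<le> L \<and> r < \<bar>prefix_gain h x S t\<bar>"
  have PT: "?P S T" unfolding T_def exit_time_def using assms(2,3) by (intro LeastI[of "?P S" t]) auto
  then show "T \<le> L" "r < \<bar>prefix_gain h x S T\<bar>" by auto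
  have before: "\<not> ?P S s" if "s < T" for s
    using that not_less_Least unfolding T_def exit_time_def by blast
  have same: "?P (flip_pairs L h {..<T} S) s \<longleftrightarrow> ?P S s" if "s \<le> T" for s
    using that PT prefix_gain_flip_prefix[OF assms(1) that] by auto
  show "exit_time L h x r (flip_pairs L h {..<T} S) = T"
    unfolding exit_time_def
  proof (rule Least_equality)
    show "?P (flip_pairs L h {..<T} S) T" using same PT by simp
  next
    fix s assume "?P (flip_pairs L h {..<T} S) s"
    then show "T \<le> s" using same before by (meson less_imp_le_nat not_le)
  qed
qed

(* Flipping the pairs before the exit time is an involution of the unbalanced sets that
  moves the sum by more than 2\<theta>, hence maps close sets to far ones. *)
lemma card_close_le_balanced:
  fixes x :: "nat \<Rightarrow> real"
  assumes "L \<le> h" "L + h = n"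
  shows "2 * card {S \<in> ksubsets n k. \<bar>sum x S - z\<bar> \<le> \<theta>}
           \<le> card (ksubsets n k) + card {S \<in> ksubsets n k. \<forall>t\<le>L. \<bar>prefix_gain h x S t\<bar> \<le> 2 * \<theta>}"
proof -
  let ?K = "ksubsets n k"
  define A where "A = {S \<in> ?K. \<bar>sum x S - z\<bar> \<le> \<theta>}"
  define B where "B = {S \<in> ?K. \<forall>t\<le>L. \<bar>prefix_gain h x S t\<bar> \<le> 2 * \<theta>}"
  define \<psi> where "\<psi> S = flip_pairs L h {..<exit_time L h x (2 * \<theta>) S} S" for S
  have \<psi>: "\<psi> S \<in> ?K \<and> \<psi> (\<psi> S) = S \<and> 2 * \<theta> < \<bar>sum x (\<psi> S) - sum x S\<bar>"
    if S: "S \<in> ?K - B" for S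
  proof -
    obtain t where "t \<le> L" "2 * \<theta> < \<bar>prefix_gain h x S t\<bar>" using S unfolding B_def by auto
    note T = exit_time_flip_prefix[OF assms(1) this]
    have "\<psi> (\<psi> S) = S" using T(3) assms(1) by (simp add: \<psi>_def)
    moreover have "sum x (\<psi> S) - sum x S = prefix_gain h x S (exit_time L h x (2 * \<theta>) S)"
      unfolding \<psi>_def using S T(1) assms ksubsetsD(1) by (intro sum_flip_prefix) auto
    ultimately show ?thesis
      using S T(2) assms unfolding \<psi>_def by (auto intro: flip_pairs_in_ksubsets)
  qed
  have "\<psi> ` (A - B) \<subseteq> ?K - A"
  proof (rule image_subsetI)
    fix S assume "S \<in> A - B"
    then have "S \<in> ?K - B" "\<bar>sum x S - z\<bar> \<le> \<theta>" unfolding A_def by auto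
    then show "\<psi> S \<in> ?K - A" using \<psi>[of S] unfolding A_def by auto
  qed
  moreover have "inj_on \<psi> (A - B)"
  proof (rule inj_on_inverseI[where g = \<psi>])
    show "S \<in> A - B \<Longrightarrow> \<psi> (\<psi> S) = S" for S using \<psi>[of S] unfolding A_def by auto
  qed
  ultimately have "card (A - B) \<le> card (?K - A)" by (intro card_inj_on_le) auto
  also have "\<dots> = card ?K - card A" unfolding A_def by (intro card_Diff_subset) auto
  finally have "card (A - B) + card A \<le> card ?K"
    using card_mono[of ?K A] unfolding A_def by auto
  moreover have "card A \<le> card (A - B) + card B"
    using card_Un_le[of "A - B" B] card_mono[of "(A - B) \<union> B" A]
    unfolding A_def B_def by auto
  ultimately show ?thesis unfolding A_def B_def by linarith
qed

lemma card_flip_pairs_preimage: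
  assumes "L \<le> h" "L + h = n" "B \<subseteq> ksubsets n k"
  shows "card {S \<in> ksubsets n k. flip_pairs L h R S \<in> B} = card B"
proof -
  have "{S \<in> ksubsets n k. flip_pairs L h R S \<in> B} = flip_pairs L h R ` B"
    using assms by (force intro: flip_pairs_in_ksubsets image_eqI[where x = "flip_pairs L h R _"])
  moreover have "inj_on (flip_pairs L h R) B"
    by (rule inj_on_inverseI[where g = "flip_pairs L h R"]) (simp add: assms(1))
  ultimately show ?thesis by (simp add: card_image)
qed

lemma pair_gain_abs_le: "\<bar>pair_gain h x S l\<bar> \<le> \<bar>x l - x (l + h)\<bar>"
  unfolding pair_gain_def by (auto simp: abs_mult)

lemma flip_pairs_balanced_iff:
  assumes "L \<le> h"
  shows "(\<forall>t\<le>L. \<bar>prefix_gain h x (flip_pairs L h R S) t\<bar> \<le> r)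
           \<longleftrightarrow> walk_confined (\<lambda>l. if l < L then pair_gain h x S l else 0) r R L"
proof -
  have "prefix_gain h x (flip_pairs L h R S) t = walk (\<lambda>l. if l < L then pair_gain h x S l else 0) R t"
    if "t \<le> L" for t
    using that prefix_gain_flip_pairs[OF assms that] unfolding walk_def by (auto intro: sum.cong)
  then show ?thesis unfolding walk_confined_def by auto
qed

lemma card_balanced_flips_le:
  assumes "L \<le> h" "\<forall>l<L. \<bar>x l - x (l + h)\<bar> \<le> D" "0 \<le> D" "0 \<le> r" "0 < \<beta>"
  shows "real (card {R \<in> Pow {..<L}. \<forall>t\<le>L. \<bar>prefix_gain h x (flip_pairs L h R S) t\<bar> \<le> r})
           \<le> 2 ^ L * (of_bool ((\<Sum>l<L. (pair_gain h x S l)\<^sup>2) < \<beta>) + (r + D)\<^sup>2 / \<beta>)"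
proof -
  let ?c = "\<lambda>l. if l < L then pair_gain h x S l else 0"
  let ?m = "\<Sum>l<L. (pair_gain h x S l)\<^sup>2"
  let ?C = "real (card {R \<in> Pow {..<L}. \<forall>t\<le>L. \<bar>prefix_gain h x (flip_pairs L h R S) t\<bar> \<le> r})"
  have "\<bar>?c l\<bar> \<le> D" for l
    using assms(2,3) pair_gain_abs_le[of h x S l] by auto
  then have "real (card {R \<in> Pow {..<L}. walk_confined ?c r R L}) * (\<Sum>l<L. (?c l)\<^sup>2) \<le> 2 ^ L * (r + D)\<^sup>2"
    using assms(4) by (rule card_walk_confined_le)
  then have walk: "?C * ?m \<le> 2 ^ L * (r + D)\<^sup>2"
    by (simp add: flip_pairs_balanced_iff[OF assms(1)])
  have "?C \<le> real (card (Pow {..<L}))" by (intro of_nat_mono card_mono) auto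
  then have pow: "?C \<le> 2 ^ L" by (simp add: card_Pow)
  show ?thesis
  proof (cases "?m < \<beta>")
    case True
    then show ?thesis using pow assms(5) by (simp add: distrib_left add_increasing2)
  next
    case False
    then have "?C * \<beta> \<le> 2 ^ L * (r + D)\<^sup>2"
      using walk by (meson mult_left_mono not_less of_nat_0_le_iff order_trans)
    then show ?thesis using False assms(5) by (simp add: le_divide_eq)
  qed
qed

(* Averaging over all flip patterns R: a set S is balanced after flipping R iff the walk
  with steps pair_gain h x S and signs R stays in [-r, r]. *)
lemma card_balanced_le:
  fixes x :: "nat \<Rightarrow> real"
  assumes "L \<le> h" "L + h = n" "\<forall>l<L. \<bar>x l - x (l + h)\<bar> \<le> D" "0 \<le> D" "0 \<le> r" "0 < \<beta>"
  shows "real (card {S \<in> ksubsets n k. \<forall>t\<le>L. \<bar>prefix_gain h x S t\<bar> \<le> r})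
           \<le> real (card {S \<in> ksubsets n k. (\<Sum>l<L. (pair_gain h x S l)\<^sup>2) < \<beta>})
             + real (card (ksubsets n k)) * (r + D)\<^sup>2 / \<beta>"
proof -
  let ?K = "ksubsets n k"
  define B where "B = {S \<in> ?K. \<forall>t\<le>L. \<bar>prefix_gain h x S t\<bar> \<le> r}"
  define m where "m S = (\<Sum>l<L. (pair_gain h x S l)\<^sup>2)" for S
  have preimage: "card {S \<in> ?K. flip_pairs L h R S \<in> B} = card B" for R
    by (rule card_flip_pairs_preimage[OF assms(1,2)]) (simp add: B_def)
  have "2 ^ L * real (card B) = (\<Sum>R\<in>Pow {..<L}. real (card {S \<in> ?K. flip_pairs L h R S \<in> B}))"
    by (simp only: preimage) (simp add: card_Pow)
  also have "\<dots> = (\<Sum>S\<in>?K. real (card {R \<in> Pow {..<L}. flip_pairs L h R S \<in> B}))"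
  proof -
    have "(\<Sum>R\<in>Pow {..<L}. card {S \<in> ?K. flip_pairs L h R S \<in> B})
        = (\<Sum>S\<in>?K. card {R \<in> Pow {..<L}. flip_pairs L h R S \<in> B})"
      by (rule sum_multicount_gen) auto
    then have "real (\<Sum>R\<in>Pow {..<L}. card {S \<in> ?K. flip_pairs L h R S \<in> B})
        = real (\<Sum>S\<in>?K. card {R \<in> Pow {..<L}. flip_pairs L h R S \<in> B})"
      by (rule arg_cong)
    then show ?thesis by (simp only: of_nat_sum)
  qed
  also have "\<dots> \<le> (\<Sum>S\<in>?K. 2 ^ L * (of_bool (m S < \<beta>) + (r + D)\<^sup>2 / \<beta>))"
  proof (rule sum_mono)
    fix S assume "S \<in> ?K"
    then have "{R \<in> Pow {..<L}. flip_pairs L h R S \<in> B}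
        = {R \<in> Pow {..<L}. \<forall>t\<le>L. \<bar>prefix_gain h x (flip_pairs L h R S) t\<bar> \<le> r}"
      using assms(1,2) flip_pairs_in_ksubsets unfolding B_def by blast
    then show "real (card {R \<in> Pow {..<L}. flip_pairs L h R S \<in> B})
        \<le> 2 ^ L * (of_bool (m S < \<beta>) + (r + D)\<^sup>2 / \<beta>)"
      unfolding m_def using card_balanced_flips_le[OF assms(1,3-6)] by simp
  qed
  also have "\<dots> = 2 ^ L * (real (card {S \<in> ?K. m S < \<beta>}) + real (card ?K) * (r + D)\<^sup>2 / \<beta>)"
    by (simp add: sum_distrib_left[symmetric] sum.distrib Int_def)
  finally show ?thesis unfolding B_def m_def by simp
qed

section \<open>Second moment of the separated weight\<close>

definition separated_weight :: "nat \<Rightarrow> nat \<Rightarrow> (nat \<Rightarrow> real) \<Rightarrow> nat set \<Rightarrow> real" where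
  "separated_weight L h w S = (\<Sum>l<L. of_bool (separates S l (l + h)) * w l)"

lemma sum_pair_gain_sq:
  "(\<Sum>l<L. (pair_gain h x S l)\<^sup>2) = separated_weight L h (\<lambda>l. (x l - x (l + h))\<^sup>2) S"
  unfolding separated_weight_def pair_gain_def separates_def
  by (intro sum.cong) (auto simp: power2_eq_square)

lemma sum_separated_weight:
  assumes "L \<le> h" "L + h \<le> n" "1 \<le> k"
  shows "(\<Sum>S\<in>ksubsets n k. separated_weight L h w S) = 2 * real ((n - 2) choose (k - 1)) * (\<Sum>l<L. w l)"
proof -
  have "(\<Sum>S\<in>ksubsets n k. separated_weight L h w S)
      = (\<Sum>l<L. w l * real (card {S \<in> ksubsets n k. separates S l (l + h)}))"
    unfolding separated_weight_def by (subst sum.swap) (simp add: sum_distrib_right[symmetric] Int_def mult.commute)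
  also have "\<dots> = (\<Sum>l<L. w l * (2 * real ((n - 2) choose (k - 1))))"
    using assms by (intro sum.cong) (simp_all add: card_ksubsets_separating)
  finally show ?thesis by (simp add: sum_distrib_right mult.commute)
qed

lemma sum_separated_weight_sq_le:
  assumes "L \<le> h" "L + h \<le> n" "2 \<le> k" "\<And>l. 0 \<le> w l"
  shows "(\<Sum>S\<in>ksubsets n k. (separated_weight L h w S)\<^sup>2)
           \<le> 2 * real ((n - 2) choose (k - 1)) * (\<Sum>l<L. (w l)\<^sup>2)
             + 4 * real ((n - 4) choose (k - 2)) * (\<Sum>l<L. w l)\<^sup>2"
proof -
  let ?K = "ksubsets n k"
  let ?N1 = "2 * real ((n - 2) choose (k - 1))" and ?N2 = "4 * real ((n - 4) choose (k - 2))"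
  let ?sep = "\<lambda>S l. separates S l (l + h)"
  have pair: "(\<Sum>S\<in>?K. of_bool (?sep S l \<and> ?sep S l') * (w l * w l'))
      \<le> w l * w l' * ?N2 + (if l = l' then (w l)\<^sup>2 * ?N1 else 0)" if "l < L" "l' < L" for l l'
  proof (cases "l = l'")
    case True
    then show ?thesis
      using that assms card_ksubsets_separating[of l n "l + h" k]
      by (simp add: Int_def power2_eq_square assms(4) mult.commute)
  next
    case False
    then have "card {S \<in> ?K. ?sep S l \<and> ?sep S l'} = 4 * ((n - 4) choose (k - 2))"
      using that assms by (intro card_ksubsets_separating_two_pairs) auto
    then show ?thesis using False by (simp add: Int_def mult.commute)
  qed
  have "(\<Sum>S\<in>?K. (separated_weight L h w S)\<^sup>2)
      = (\<Sum>l<L. \<Sum>l'<L. \<Sum>S\<in>?K. of_bool (?sep S l \<and> ?sep S l') * (w l * w l'))"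
    unfolding separated_weight_def power2_eq_square sum_product
    by (subst sum.swap) (simp add: sum.swap[of _ ?K] of_bool_conj algebra_simps)
  also have "\<dots> \<le> (\<Sum>l<L. \<Sum>l'<L. w l * w l' * ?N2 + (if l = l' then (w l)\<^sup>2 * ?N1 else 0))"
    using pair by (intro sum_mono) auto
  also have "\<dots> = (\<Sum>l<L. (\<Sum>l'<L. w l * w l' * ?N2) + (w l)\<^sup>2 * ?N1)"
    by (intro sum.cong refl) (simp add: sum.distrib)
  also have "\<dots> = ?N1 * (\<Sum>l<L. (w l)\<^sup>2) + ?N2 * (\<Sum>l<L. w l)\<^sup>2"
    by (simp add: sum.distrib power2_eq_square sum_product sum_distrib_left sum_distrib_right algebra_simps)
  finally show ?thesis .
qed

lemma card_below_le_sum_sq_deviation: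
  fixes f :: "'a \<Rightarrow> real"
  assumes "finite K" "0 \<le> a"
  shows "real (card {S \<in> K. f S < \<mu> - a}) * a\<^sup>2 \<le> (\<Sum>S\<in>K. (f S - \<mu>)\<^sup>2)"
proof -
  have "real (card {S \<in> K. f S < \<mu> - a}) * a\<^sup>2 = (\<Sum>S\<in>{S \<in> K. f S < \<mu> - a}. a\<^sup>2)" by simp
  also have "\<dots> \<le> (\<Sum>S\<in>{S \<in> K. f S < \<mu> - a}. (f S - \<mu>)\<^sup>2)"
  proof (rule sum_mono)
    fix S assume "S \<in> {S \<in> K. f S < \<mu> - a}"
    then have "a\<^sup>2 \<le> (\<mu> - f S)\<^sup>2" using assms(2) by (intro power_mono) auto
    then show "a\<^sup>2 \<le> (f S - \<mu>)\<^sup>2" by (simp add: power2_commute)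
  qed
  also have "\<dots> \<le> (\<Sum>S\<in>K. (f S - \<mu>)\<^sup>2)" using assms(1) by (intro sum_mono2) auto
  finally show ?thesis .
qed

lemma sum_sq_deviation_mean:
  fixes f :: "'a \<Rightarrow> real"
  assumes "finite K" "K \<noteq> {}"
  defines "\<mu> \<equiv> (\<Sum>S\<in>K. f S) / real (card K)"
  shows "(\<Sum>S\<in>K. (f S - \<mu>)\<^sup>2) = (\<Sum>S\<in>K. (f S)\<^sup>2) - (\<Sum>S\<in>K. f S)\<^sup>2 / real (card K)"
proof -
  have N: "0 < real (card K)" using assms(1,2) by (simp add: card_gt_0_iff)
  have "(\<Sum>S\<in>K. (f S - \<mu>)\<^sup>2) = (\<Sum>S\<in>K. (f S)\<^sup>2) - 2 * \<mu> * (\<Sum>S\<in>K. f S) + real (card K) * \<mu>\<^sup>2"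
    by (simp add: power2_diff sum.distrib sum_subtractf sum_distrib_left sum_distrib_right algebra_simps)
  then show ?thesis using N by (simp add: \<mu>_def power2_eq_square field_simps)
qed

lemma mean_separated_weight_ge:
  assumes "8 \<le> n" "\<And>l. 0 \<le> w l"
  defines "K \<equiv> ksubsets n (n div 2)"
  shows "(\<Sum>l<n div 2. w l) / 2
           \<le> (\<Sum>S\<in>K. separated_weight (n div 2) (n - n div 2) w S) / real (card K)"
proof -
  let ?T = "\<Sum>l<n div 2. w l" and ?C = "real ((n - 2) choose (n div 2 - 1))"
  have "n choose (n div 2) \<le> 4 * ((n - 2) choose (n div 2 - 1))"
    using assms(1) by (intro central_choose_le) simp
  then have "real (card K) \<le> 4 * ?C"
    unfolding K_def card_ksubsets by (simp only: of_nat_le_iff[symmetric] of_nat_mult of_nat_numeral)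
  moreover have "0 \<le> ?T" using assms(2) by (simp add: sum_nonneg)
  ultimately have "real (card K) * ?T \<le> (4 * ?C) * ?T" by (rule mult_right_mono)
  then have "real (card K) * (?T / 2) \<le> 2 * ?C * ?T" by simp
  moreover have "(\<Sum>S\<in>K. separated_weight (n div 2) (n - n div 2) w S) = 2 * ?C * ?T"
    unfolding K_def using assms(1) by (intro sum_separated_weight) auto
  moreover have "0 < real (card K)" by (simp add: K_def card_ksubsets)
  ultimately show ?thesis by (simp add: le_divide_eq mult.commute)
qed

lemma sum_sq_deviation_separated_weight_le:
  assumes "8 \<le> n" "\<And>l. 0 \<le> w l" "\<And>l. l < n div 2 \<Longrightarrow> w l \<le> D"
  defines "K \<equiv> ksubsets n (n div 2)" and "m \<equiv> separated_weight (n div 2) (n - n div 2) w"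
    and "T \<equiv> \<Sum>l<n div 2. w l"
  shows "(\<Sum>S\<in>K. (m S - (\<Sum>S\<in>K. m S) / real (card K))\<^sup>2) \<le> real (card K) * (D * T + 8 * T\<^sup>2 / real n)"
proof -
  define N where "N = real (card K)"
  define N1 where "N1 = 2 * real ((n - 2) choose (n div 2 - 1))"
  define N2 where "N2 = 4 * real ((n - 4) choose (n div 2 - 2))"
  have hn: "n div 2 \<le> n - n div 2" "n div 2 + (n - n div 2) \<le> n" using assms(1) by auto
  have N: "N = real (n choose (n div 2))" "0 < N" unfolding N_def K_def by (simp_all add: card_ksubsets)
  have "2 * ((n - 2) choose (n div 2 - 1)) \<le> n choose (n div 2)"
    using assms(1) by (intro twice_choose_le) auto
  then have "real (2 * ((n - 2) choose (n div 2 - 1))) \<le> real (n choose (n div 2))"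
    by (simp only: of_nat_le_iff)
  then have N1_le: "N1 \<le> N" unfolding N1_def N(1) by simp
  have N2: "N2 - N1\<^sup>2 / N \<le> 8 * N / real n"
    unfolding N1_def N2_def N(1) using assms(1) by (rule central_choose_variance_le)
  have "0 \<le> w 0" "w 0 \<le> D" using assms(1-3) by auto
  then have "0 \<le> D" by linarith
  have T: "0 \<le> T" unfolding T_def using assms(2) by (simp add: sum_nonneg)
  have "(\<Sum>l<n div 2. (w l)\<^sup>2) \<le> (\<Sum>l<n div 2. D * w l)"
    using assms(2,3) by (intro sum_mono) (simp add: power2_eq_square mult_right_mono)
  then have "(\<Sum>l<n div 2. (w l)\<^sup>2) \<le> D * T" by (simp add: T_def sum_distrib_left)
  then have "N1 * (\<Sum>l<n div 2. (w l)\<^sup>2) \<le> N1 * (D * T)" by (rule mult_left_mono) (simp add: N1_def)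
  moreover have "(\<Sum>S\<in>K. (m S)\<^sup>2) \<le> N1 * (\<Sum>l<n div 2. (w l)\<^sup>2) + N2 * T\<^sup>2"
    unfolding K_def m_def T_def N1_def N2_def using hn assms(1,2) by (intro sum_separated_weight_sq_le) auto
  moreover have "(\<Sum>S\<in>K. m S) = N1 * T"
    unfolding K_def m_def T_def N1_def using hn assms(1) by (subst sum_separated_weight) auto
  moreover have "(\<Sum>S\<in>K. (m S - (\<Sum>S\<in>K. m S) / N)\<^sup>2) = (\<Sum>S\<in>K. (m S)\<^sup>2) - (\<Sum>S\<in>K. m S)\<^sup>2 / N"
    using N(2) unfolding N_def by (intro sum_sq_deviation_mean) (auto simp: K_def)
  moreover have "(N1 * T)\<^sup>2 / N = T\<^sup>2 * (N1\<^sup>2 / N)" by (simp add: power_mult_distrib)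
  ultimately have "(\<Sum>S\<in>K. (m S - (\<Sum>S\<in>K. m S) / N)\<^sup>2) \<le> N1 * (D * T) + (T\<^sup>2 * N2 - T\<^sup>2 * (N1\<^sup>2 / N))"
    by (simp add: mult.commute)
  also have "\<dots> = N1 * (D * T) + T\<^sup>2 * (N2 - N1\<^sup>2 / N)" by (simp add: right_diff_distrib)
  also have "\<dots> \<le> N * (D * T) + T\<^sup>2 * (8 * N / real n)"
  proof (rule add_mono)
    show "N1 * (D * T) \<le> N * (D * T)" using N1_le \<open>0 \<le> D\<close> T by (intro mult_right_mono) auto
    show "T\<^sup>2 * (N2 - N1\<^sup>2 / N) \<le> T\<^sup>2 * (8 * N / real n)" using N2 by (intro mult_left_mono) auto
  qed
  finally show ?thesis unfolding N_def by (simp add: algebra_simps)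
qed

lemma card_small_separated_weight_le:
  assumes "8 \<le> n" "\<And>l. 0 \<le> w l" "\<And>l. l < n div 2 \<Longrightarrow> w l \<le> D"
  defines "K \<equiv> ksubsets n (n div 2)" and "m \<equiv> separated_weight (n div 2) (n - n div 2) w"
    and "T \<equiv> \<Sum>l<n div 2. w l"
  assumes "0 < T"
  shows "real (card {S \<in> K. m S < T / 4}) \<le> 16 * real (card K) * (D / T + 8 / real n)"
proof -
  define \<mu> where "\<mu> = (\<Sum>S\<in>K. m S) / real (card K)"
  have "T / 2 \<le> \<mu>" unfolding \<mu>_def T_def K_def m_def using assms(1,2) by (rule mean_separated_weight_ge)
  then have "{S \<in> K. m S < T / 4} \<subseteq> {S \<in> K. m S < \<mu> - T / 4}" by auto
  then have "real (card {S \<in> K. m S < T / 4}) * (T / 4)\<^sup>2 \<le> real (card {S \<in> K. m S < \<mu> - T / 4}) * (T / 4)\<^sup>2"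
    by (intro mult_right_mono of_nat_mono card_mono) (auto simp: K_def)
  also have "\<dots> \<le> (\<Sum>S\<in>K. (m S - \<mu>)\<^sup>2)"
    using \<open>0 < T\<close> by (intro card_below_le_sum_sq_deviation) (auto simp: K_def)
  also have "\<dots> \<le> real (card K) * (D * T + 8 * T\<^sup>2 / real n)"
    unfolding \<mu>_def K_def m_def T_def using assms(1-3) by (rule sum_sq_deviation_separated_weight_le)
  also have "\<dots> = (16 * real (card K) * (D / T + 8 / real n)) * (T / 4)\<^sup>2"
    using \<open>0 < T\<close> by (simp add: field_simps power2_eq_square)
  finally show ?thesis using \<open>0 < T\<close> by (simp add: mult_le_cancel_right)
qed

section \<open>Small coordinates\<close>

lemma sum_sq_pair_diff_ge:
  fixes x :: "nat \<Rightarrow> real"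
  assumes "L \<le> h" "h \<le> L + 1" "L + h = n" "0 < n" and sorted: "\<And>i j. i \<le> j \<Longrightarrow> j < n \<Longrightarrow> x i \<le> x j"
  shows "(\<Sum>i<n. (x i)\<^sup>2) - (\<Sum>i<n. x i)\<^sup>2 / real n \<le> (\<Sum>l<L. (x l - x (l + h))\<^sup>2)"
proof -
  \<comment> \<open>x (h - 1) is a median and every pair straddles it.\<close>
  define M where "M = x (h - 1)"
  define g where "g i = (x i - M)\<^sup>2" for i
  have pair: "g l + g (l + h) \<le> (x l - x (l + h))\<^sup>2" if "l < L" for l
  proof -
    have "x l \<le> M" "M \<le> x (l + h)" unfolding M_def using that assms(1-3) by (auto intro: sorted)
    then have "0 \<le> (M - x l) * (x (l + h) - M)" by simp
    moreover have "(x l - x (l + h))\<^sup>2 = (M - x l)\<^sup>2 + (x (l + h) - M)\<^sup>2 + 2 * ((M - x l) * (x (l + h) - M))"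
      by (simp add: power2_eq_square algebra_simps)
    ultimately show ?thesis unfolding g_def by (simp add: power2_commute)
  qed
  have "(\<Sum>i<n. g i) = (\<Sum>l<L. g l + g (l + h)) + (\<Sum>i\<in>{L..<h}. g i)"
    by (rule sum_lessThan_pairs[OF assms(1,3)])
  also have "(\<Sum>i\<in>{L..<h}. g i) = 0"
  proof (intro sum.neutral ballI)
    fix i assume "i \<in> {L..<h}"
    then have "i = h - 1" using assms(2) by auto
    then show "g i = 0" by (simp add: g_def M_def)
  qed
  also have "(\<Sum>l<L. g l + g (l + h)) \<le> (\<Sum>l<L. (x l - x (l + h))\<^sup>2)"
    using pair by (intro sum_mono) auto
  finally have upper: "(\<Sum>i<n. g i) \<le> (\<Sum>l<L. (x l - x (l + h))\<^sup>2)" by simp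
  have "(\<Sum>i<n. g i) = (\<Sum>i<n. (x i)\<^sup>2) - 2 * M * (\<Sum>i<n. x i) + real n * M\<^sup>2"
    unfolding g_def by (simp add: power2_diff sum.distrib sum_subtractf sum_distrib_left mult.commute mult.left_commute)
  moreover have "0 \<le> (real n * M - (\<Sum>i<n. x i))\<^sup>2 / real n" by simp
  moreover have "(real n * M - (\<Sum>i<n. x i))\<^sup>2 / real n
      = real n * M\<^sup>2 - 2 * M * (\<Sum>i<n. x i) + (\<Sum>i<n. x i)\<^sup>2 / real n"
    using assms(4) by (simp add: power2_diff field_simps power2_eq_square)
  ultimately show ?thesis using upper by linarith
qed

lemma sum_sq_half_diff_ge:
  fixes x :: "nat \<Rightarrow> real"
  assumes "8 \<le> n" and sorted: "\<And>i j. i \<le> j \<Longrightarrow> j < n \<Longrightarrow> x i \<le> x j"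
    and "(\<Sum>i<n. (x i)\<^sup>2) = 1" "(\<Sum>i<n. x i)\<^sup>2 \<le> real n / 4"
  shows "3 / 4 \<le> (\<Sum>l<n div 2. (x l - x (l + (n - n div 2)))\<^sup>2)"
proof -
  have "n div 2 \<le> n - n div 2" "n - n div 2 \<le> n div 2 + 1" "n div 2 + (n - n div 2) = n" by auto
  then have "(\<Sum>i<n. (x i)\<^sup>2) - (\<Sum>i<n. x i)\<^sup>2 / real n \<le> (\<Sum>l<n div 2. (x l - x (l + (n - n div 2)))\<^sup>2)"
    by (rule sum_sq_pair_diff_ge[where x = x, OF _ _ _ _ sorted]) (use assms(1) in simp)
  moreover have "(\<Sum>i<n. x i)\<^sup>2 / real n \<le> 1 / 4" using assms(1,4) by (simp add: divide_le_eq)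
  ultimately show ?thesis using assms(3) by linarith
qed

lemma card_balanced_le_of_sorted_small:
  fixes x :: "nat \<Rightarrow> real"
  assumes "8 \<le> n" "\<And>i j. i \<le> j \<Longrightarrow> j < n \<Longrightarrow> x i \<le> x j"
    and "(\<Sum>i<n. (x i)\<^sup>2) = 1" "(\<Sum>i<n. x i)\<^sup>2 \<le> real n / 4"
    and small: "\<forall>i<n. \<bar>x i\<bar> < 4 * \<theta>" and "0 < \<theta>"
  defines "K \<equiv> ksubsets n (n div 2)" and "L \<equiv> n div 2" and "h \<equiv> n - n div 2"
  shows "real (card {S \<in> K. \<forall>t\<le>L. \<bar>prefix_gain h x S t\<bar> \<le> 2 * \<theta>})
           \<le> (2000 * \<theta>\<^sup>2 + 128 / real n) * real (card K)"
proof -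
  define w where "w l = (x l - x (l + h))\<^sup>2" for l
  define T where "T = (\<Sum>l<L. w l)"
  define N where "N = real (card K)"
  have Lh: "L \<le> h" "h \<le> L + 1" "L + h = n" unfolding L_def h_def by auto
  have T: "3 / 4 \<le> T"
    unfolding T_def w_def L_def h_def using assms(1-4) by (rule sum_sq_half_diff_ge)
  have diff: "\<bar>x l - x (l + h)\<bar> \<le> 8 * \<theta>" if "l < L" for l
  proof -
    have "\<bar>x l\<bar> < 4 * \<theta>" "\<bar>x (l + h)\<bar> < 4 * \<theta>" using small that Lh by auto
    then show ?thesis by linarith
  qed
  have w: "w l \<le> 64 * \<theta>\<^sup>2" if "l < n div 2" for l
  proof -
    have "\<bar>x l - x (l + h)\<bar>\<^sup>2 \<le> (8 * \<theta>)\<^sup>2" using diff[of l] that by (intro power_mono) (auto simp: L_def)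
    then show ?thesis by (simp add: w_def power_mult_distrib)
  qed
  have "real (card {S \<in> K. \<forall>t\<le>L. \<bar>prefix_gain h x S t\<bar> \<le> 2 * \<theta>})
      \<le> real (card {S \<in> K. (\<Sum>l<L. (pair_gain h x S l)\<^sup>2) < T / 4}) + N * (2 * \<theta> + 8 * \<theta>)\<^sup>2 / (T / 4)"
    unfolding K_def N_def using Lh(1,3) diff \<open>0 < \<theta>\<close> T by (intro card_balanced_le) auto
  also have "\<dots> \<le> 16 * N * (64 * \<theta>\<^sup>2 / T + 8 / real n) + N * (2 * \<theta> + 8 * \<theta>)\<^sup>2 / (T / 4)"
  proof -
    have "real (card {S \<in> ksubsets n (n div 2).
          separated_weight (n div 2) (n - n div 2) w S < (\<Sum>l<n div 2. w l) / 4})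
        \<le> 16 * real (card (ksubsets n (n div 2))) * (64 * \<theta>\<^sup>2 / (\<Sum>l<n div 2. w l) + 8 / real n)"
      using assms(1) w T by (intro card_small_separated_weight_le) (auto simp: w_def T_def L_def)
    moreover have "(\<lambda>l. (x l - x (l + h))\<^sup>2) = w" by (simp add: w_def fun_eq_iff)
    ultimately show ?thesis
      unfolding sum_pair_gain_sq K_def N_def T_def L_def h_def by simp
  qed
  also have "\<dots> = N * (\<theta>\<^sup>2 * (1 / T) * 1424 + 128 / real n)"
    using T by (simp add: field_simps power2_eq_square)
  also have "\<dots> \<le> N * (\<theta>\<^sup>2 * (4 / 3) * 1424 + 128 / real n)"
    using T unfolding N_def by (intro mult_left_mono add_mono mult_right_mono) (auto simp: divide_le_eq)
  also have "\<dots> \<le> (2000 * \<theta>\<^sup>2 + 128 / real n) * N" by (simp add: algebra_simps N_def)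
  finally show ?thesis unfolding N_def .
qed

lemma card_close_le_of_sorted_small:
  fixes x :: "nat \<Rightarrow> real"
  assumes "8 \<le> n" "\<And>i j. i \<le> j \<Longrightarrow> j < n \<Longrightarrow> x i \<le> x j"
    "(\<Sum>i<n. (x i)\<^sup>2) = 1" "(\<Sum>i<n. x i)\<^sup>2 \<le> real n / 4" "\<forall>i<n. \<bar>x i\<bar> < 4 * \<theta>" "0 < \<theta>"
  shows "real (card {S \<in> ksubsets n (n div 2). \<bar>sum x S - z\<bar> \<le> \<theta>})
           \<le> (1/2 + 1000 * \<theta>\<^sup>2 + 64 / real n) * real (card (ksubsets n (n div 2)))"
proof -
  let ?K = "ksubsets n (n div 2)"
  have "2 * card {S \<in> ?K. \<bar>sum x S - z\<bar> \<le> \<theta>}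
      \<le> card ?K + card {S \<in> ?K. \<forall>t\<le>n div 2. \<bar>prefix_gain (n - n div 2) x S t\<bar> \<le> 2 * \<theta>}"
    by (rule card_close_le_balanced) auto
  then have "real (2 * card {S \<in> ?K. \<bar>sum x S - z\<bar> \<le> \<theta>})
      \<le> real (card ?K + card {S \<in> ?K. \<forall>t\<le>n div 2. \<bar>prefix_gain (n - n div 2) x S t\<bar> \<le> 2 * \<theta>})"
    by (simp only: of_nat_le_iff)
  then have "2 * real (card {S \<in> ?K. \<bar>sum x S - z\<bar> \<le> \<theta>})
      \<le> real (card ?K) + real (card {S \<in> ?K. \<forall>t\<le>n div 2. \<bar>prefix_gain (n - n div 2) x S t\<bar> \<le> 2 * \<theta>})"
    by simp
  moreover have "real (card {S \<in> ?K. \<forall>t\<le>n div 2. \<bar>prefix_gain (n - n div 2) x S t\<bar> \<le> 2 * \<theta>})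
      \<le> (2000 * \<theta>\<^sup>2 + 128 / real n) * real (card ?K)"
    using assms by (rule card_balanced_le_of_sorted_small)
  moreover have "(2000 * \<theta>\<^sup>2 + 128 / real n) * real (card ?K)
      = 2000 * (\<theta>\<^sup>2 * real (card ?K)) + 128 * (real (card ?K) / real n)"
    "(1/2 + 1000 * \<theta>\<^sup>2 + 64 / real n) * real (card ?K)
      = real (card ?K) / 2 + 1000 * (\<theta>\<^sup>2 * real (card ?K)) + 64 * (real (card ?K) / real n)"
    by (simp_all add: algebra_simps)
  ultimately show ?thesis by linarith
qed

lemma card_ksubsets_sum_comp:
  assumes "bij_betw \<pi> {..<n} {..<n}"
  shows "card {S \<in> ksubsets n k. P (sum (x \<circ> \<pi>) S)} = card {S \<in> ksubsets n k. P (sum x S)}"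
proof -
  have "bij_betw (image \<pi>) {S \<in> Pow {..<n}. card S = k \<and> P (sum (x \<circ> \<pi>) S)}
      {T \<in> Pow {..<n}. card T = k \<and> P (sum x T)}"
  proof (rule bij_betw_Collect[OF bij_betw_image_Pow[OF assms]])
    fix S assume "S \<in> Pow {..<n}"
    then have "inj_on \<pi> S" using bij_betw_imp_inj_on[OF assms] inj_on_subset by blast
    then show "(card (\<pi> ` S) = k \<and> P (sum x (\<pi> ` S))) = (card S = k \<and> P (sum (x \<circ> \<pi>) S))"
      by (simp add: card_image sum.reindex)
  qed
  moreover have "{S \<in> Pow {..<n}. card S = k \<and> Q S} = {S \<in> ksubsets n k. Q S}" for Q
    by (auto simp: ksubsets_def)
  ultimately show ?thesis by (simp add: bij_betw_same_card)
qed

lemma sorting_permutation: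
  fixes x :: "nat \<Rightarrow> 'a::linorder"
  obtains \<pi> where "bij_betw \<pi> {..<n} {..<n}" "\<And>i j. i \<le> j \<Longrightarrow> j < n \<Longrightarrow> x (\<pi> i) \<le> x (\<pi> j)"
proof
  let ?xs = "sort_key x [0..<n]"
  have "distinct ?xs" by simp
  moreover have "length ?xs = n" "set ?xs = {..<n}" by auto
  ultimately show "bij_betw ((!) ?xs) {..<n} {..<n}" using bij_betw_nth[of ?xs] by simp
  show "x (?xs ! i) \<le> x (?xs ! j)" if "i \<le> j" "j < n" for i j
    using sorted_nth_mono[OF sorted_sort_key[of x "[0..<n]"], of i j] that by simp
qed

lemma card_close_le_of_small_coordinates:
  fixes x :: "nat \<Rightarrow> real"
  assumes "8 \<le> n" "(\<Sum>i<n. (x i)\<^sup>2) = 1" "(\<Sum>i<n. x i)\<^sup>2 \<le> real n / 4"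
    "\<forall>i<n. \<bar>x i\<bar> < 4 * \<theta>" "0 < \<theta>"
  shows "real (card {S \<in> ksubsets n (n div 2). \<bar>sum x S - z\<bar> \<le> \<theta>})
           \<le> (1/2 + 1000 * \<theta>\<^sup>2 + 64 / real n) * real (card (ksubsets n (n div 2)))"
proof -
  obtain \<pi> where \<pi>: "bij_betw \<pi> {..<n} {..<n}" "\<And>i j. i \<le> j \<Longrightarrow> j < n \<Longrightarrow> x (\<pi> i) \<le> x (\<pi> j)"
    using sorting_permutation[where n = n and x = x] by blast
  have reindex: "(\<Sum>i<n. f (\<pi> i)) = (\<Sum>i<n. f i)" for f :: "nat \<Rightarrow> real"
    using sum.reindex_bij_betw[OF \<pi>(1), of f] by simp
  have "\<forall>i<n. \<bar>(x \<circ> \<pi>) i\<bar> < 4 * \<theta>" using assms(4) \<pi>(1) by (auto simp: bij_betw_def)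
  then have "real (card {S \<in> ksubsets n (n div 2). \<bar>sum (x \<circ> \<pi>) S - z\<bar> \<le> \<theta>})
      \<le> (1/2 + 1000 * \<theta>\<^sup>2 + 64 / real n) * real (card (ksubsets n (n div 2)))"
    using assms(1-3,5) \<pi>(2) reindex[of x] reindex[of "\<lambda>i. (x i)\<^sup>2"]
    by (intro card_close_le_of_sorted_small) auto
  moreover have "card {S \<in> ksubsets n (n div 2). \<bar>sum (x \<circ> \<pi>) S - z\<bar> \<le> \<theta>}
      = card {S \<in> ksubsets n (n div 2). \<bar>sum x S - z\<bar> \<le> \<theta>}"
    by (rule card_ksubsets_sum_comp[OF \<pi>(1), where P = "\<lambda>s. \<bar>s - z\<bar> \<le> \<theta>"])
  ultimately show ?thesis by (simp only:)
qed

lemma card_close_le: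
  fixes x :: "nat \<Rightarrow> real" and \<epsilon> :: real
  assumes "0 < \<epsilon>" "\<epsilon> < 1" "8 \<le> n" "1000 / \<epsilon>\<^sup>2 \<le> real n"
    "(\<Sum>i<n. (x i)\<^sup>2) = 1" "(\<Sum>i<n. x i)\<^sup>2 \<le> real n / 4"
  shows "real (card {S \<in> ksubsets n (n div 2). \<bar>sum x S - z\<bar> \<le> sqrt (\<epsilon> / 2000)})
           \<le> (1/2 + \<epsilon>) * real (card (ksubsets n (n div 2)))"
proof -
  let ?\<theta> = "sqrt (\<epsilon> / 2000)" and ?N = "real (card (ksubsets n (n div 2)))"
  have \<theta>: "0 < ?\<theta>" "?\<theta>\<^sup>2 = \<epsilon> / 2000" using assms(1) by simp_all
  have "1000 / \<epsilon> \<le> real n * \<epsilon>"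
    using assms(1,4) by (simp add: power2_eq_square field_simps)
  have "1000 \<le> \<epsilon>\<^sup>2 * real n" using assms(1,4) by (simp add: field_simps)
  also have "\<dots> \<le> \<epsilon> * real n"
    using assms(1,2) by (intro mult_right_mono) (auto simp: power2_eq_square mult_left_le)
  finally have "1000 \<le> \<epsilon> * real n" .
  show ?thesis
  proof (cases "\<exists>i<n. 4 * ?\<theta> \<le> \<bar>x i\<bar>")
    case True
    then obtain i where "i < n" "4 * ?\<theta> \<le> \<bar>x i\<bar>" by blast
    then have "real (card {S \<in> ksubsets n (n div 2). \<bar>sum x S - z\<bar> \<le> ?\<theta>})
        \<le> (1/2 + (1 + 1 / (4 * ?\<theta>\<^sup>2)) / (2 * real n)) * ?N"
      using assms(3,5) \<theta>(1) by (intro card_close_le_of_large_coordinate) auto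
    also have "(1 + 1 / (4 * ?\<theta>\<^sup>2)) / (2 * real n) \<le> \<epsilon>"
      using \<open>1000 / \<epsilon> \<le> real n * \<epsilon>\<close> assms(1-3) \<theta>(2) by (simp add: field_simps)
    finally show ?thesis by (simp add: mult_right_mono)
  next
    case False
    then have "real (card {S \<in> ksubsets n (n div 2). \<bar>sum x S - z\<bar> \<le> ?\<theta>})
        \<le> (1/2 + 1000 * ?\<theta>\<^sup>2 + 64 / real n) * ?N"
      using assms(3,5,6) \<theta>(1) by (intro card_close_le_of_small_coordinates) auto
    also have "64 / real n \<le> \<epsilon> / 2"
      using \<open>1000 \<le> \<epsilon> * real n\<close> assms(1,3) by (simp add: field_simps)
    then have "(1/2 + 1000 * ?\<theta>\<^sup>2 + 64 / real n) * ?N \<le> (1/2 + \<epsilon>) * ?N"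
      using \<theta>(2) by (intro mult_right_mono) auto
    finally show ?thesis .
  qed
qed

theorem lemma6p3:
  fixes \<epsilon> :: real
  assumes "0 < \<epsilon>" and "\<epsilon> < 1/8"
  shows "\<exists>\<theta>>0. \<exists>n0::nat. \<forall>n\<ge>n0. \<forall>x::nat \<Rightarrow> real.
           (\<Sum>i<n. (x i)\<^sup>2) = 1 \<longrightarrow>
           \<bar>(\<Sum>i<n. x i) / sqrt (real n)\<bar> \<le> 1/2 \<longrightarrow>
           levy_slice n x \<theta> \<le> 1/2 + \<epsilon>"
proof (intro exI[of _ "sqrt (\<epsilon> / 2000)"] exI[of _ "max 8 (nat \<lceil>1000 / \<epsilon>\<^sup>2\<rceil>)"] conjI allI impI)
  show "0 < sqrt (\<epsilon> / 2000)" using assms(1) by simp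
  fix n and x :: "nat \<Rightarrow> real"
  assume n: "max 8 (nat \<lceil>1000 / \<epsilon>\<^sup>2\<rceil>) \<le> n" and norm: "(\<Sum>i<n. (x i)\<^sup>2) = 1"
    and mean: "\<bar>(\<Sum>i<n. x i) / sqrt (real n)\<bar> \<le> 1/2"
  have "8 \<le> n" "1000 / \<epsilon>\<^sup>2 \<le> real n" using n by linarith+
  moreover have "(\<Sum>i<n. x i)\<^sup>2 \<le> real n / 4"
  proof -
    have "\<bar>\<Sum>i<n. x i\<bar> \<le> sqrt (real n) / 2"
      using mean \<open>8 \<le> n\<close> by (simp add: divide_le_eq mult.commute)
    then have "\<bar>\<Sum>i<n. x i\<bar>\<^sup>2 \<le> (sqrt (real n) / 2)\<^sup>2" by (intro power_mono) auto
    then show ?thesis by (simp add: power_divide)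
  qed
  ultimately show "levy_slice n x (sqrt (\<epsilon> / 2000)) \<le> 1/2 + \<epsilon>"
    using assms norm by (intro levy_slice_le_of_card card_close_le) auto
qed

end
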